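(* Let $\Gamma$ be a (not necessarily finite) subgroup of $GL_k(\mathbb{C})$ with defining representation $\pi$ on $\mathbb{C}^k$, and let $n\ge1$. Let $\Gamma_n$ act on $\mathbb{C}^{kn}=(\mathbb{C}^k)^n$. Then the virtual characters $\lambda(\mathbb{C}^{kn}):=\sum_{i=0}^{kn}(-1)^i\Lambda^i\mathbb{C}^{kn}$ and $\eta_n(\lambda(\pi))$ of $\Gamma_n$ are equal. Here $\lambda(\pi)=\sum_{i=0}^k(-1)^i\Lambda^i\pi$.
   Context: $\Gamma_n=\Gamma^n\rtimes S_n$ is the wreath product, with multiplication $(g,\sigma)(h,\tau)=(g\,\sigma(h),\sigma\tau)$ and $S_n$ permuting the factors of $\Gamma^n$. It acts on $(\mathbb{C}^k)^n$ by letting $\Gamma^n$ act factorwise via $\pi$ and $S_n$ permute the factors; $\Lambda^i\mathbb{C}^{kn}$ carries the induced action. For a representation $V$ of $\Gamma$ with character $\gamma$, $\eta_n(\gamma)$ is the character of $V^{\otimes n}$, on which $\Gamma^n$ acts factor by factor and $S_n$ permutes the factors. $\varepsilon_n(\gamma)$ is the character of $\varepsilon_n\otimes V^{\otimes n}$, where $\varepsilon_n$ is the one-dimensional representation of $\Gamma_n$ that is trivial on $\Gamma^n$ and the sign on $S_n$. $\eta_n$ is extended to virtual characters by the rule, for characters $\beta,\gamma$ of $\Gamma$: $\eta_n(\beta-\gamma)=\sum_{m=0}^n(-1)^m\mathrm{Ind}^{\Gamma_n}_{\Gamma_{n-m}\times\Gamma_m}\big[\eta_{n-m}(\beta)\otimes\varepsilon_m(\gamma)\big]$.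 In particular $\eta_n(\lambda(\pi))$ is obtained with $\beta=\sum_{i\text{ even}}\Lambda^i\pi$ and $\gamma=\sum_{i\text{ odd}}\Lambda^i\pi$. *)

theory Defs
  imports "Jordan_Normal_Form.Determinant"
begin

definition subgroup_GL :: "nat \<Rightarrow> complex mat set \<Rightarrow> bool" where
  "subgroup_GL k \<Gamma> \<longleftrightarrow> \<Gamma> \<subseteq> carrier_mat k k \<and> 1\<^sub>m k \<in> \<Gamma>
     \<and> (\<forall>A\<in>\<Gamma>. \<forall>B\<in>\<Gamma>. A * B \<in> \<Gamma>)
     \<and> (\<forall>A\<in>\<Gamma>. \<exists>B\<in>\<Gamma>. A * B = 1\<^sub>m k \<and> B * A = 1\<^sub>m k)"

text \<open>Matrix entry of Lambda^i A in the standard basis e_S (S an i-subset of the index set,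
  listed increasingly): the minor of A with rows S and columns T.\<close>
definition wedge_entry :: "complex mat \<Rightarrow> nat set \<Rightarrow> nat set \<Rightarrow> complex" where
  "wedge_entry A S T = det (mat (card S) (card S)
      (\<lambda>(r, c). A $$ (sorted_list_of_set S ! r, sorted_list_of_set T ! c)))"

definition ext_char :: "nat \<Rightarrow> complex mat \<Rightarrow> complex" where
  "ext_char i A = (\<Sum>S\<in>{S. S \<subseteq> {0..<dim_row A} \<and> card S = i}. wedge_entry A S S)"

definition lambda_char :: "complex mat \<Rightarrow> complex" where
  "lambda_char A = (\<Sum>i = 0..dim_row A. (-1) ^ i * ext_char i A)"

text \<open>The representations beta = sum_{i even} Lambda^i pi and gamma = sum_{i odd} Lambda^i pi,
  with basis the subsets of {0..<k} of even resp. odd cardinality, and the matrix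
  of g (block diagonal with blocks Lambda^i g).\<close>
definition even_basis :: "nat \<Rightarrow> nat set set" where
  "even_basis k = {S. S \<subseteq> {0..<k} \<and> even (card S)}"

definition odd_basis :: "nat \<Rightarrow> nat set set" where
  "odd_basis k = {S. S \<subseteq> {0..<k} \<and> odd (card S)}"

definition wedge_sum_rep :: "complex mat \<Rightarrow> nat set \<Rightarrow> nat set \<Rightarrow> complex" where
  "wedge_sum_rep A S T = (if card S = card T then wedge_entry A S T else 0)"

definition wreath :: "complex mat set \<Rightarrow> nat \<Rightarrow> nat \<Rightarrow> ((nat \<Rightarrow> complex mat) \<times> (nat \<Rightarrow> nat)) set" where
  "wreath \<Gamma> k n = {(g, \<sigma>). (\<forall>j<n. g j \<in> \<Gamma>) \<and> (\<forall>j\<ge>n. g j = 1\<^sub>m k) \<and> \<sigma> permutes {..<n}}"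

text \<open>(g,sigma)(h,tau) = (g sigma(h), sigma tau), where sigma(h)_j = h_{sigma^{-1} j}.\<close>
definition wmult :: "nat \<Rightarrow> nat \<Rightarrow> ((nat \<Rightarrow> complex mat) \<times> (nat \<Rightarrow> nat))
    \<Rightarrow> ((nat \<Rightarrow> complex mat) \<times> (nat \<Rightarrow> nat)) \<Rightarrow> ((nat \<Rightarrow> complex mat) \<times> (nat \<Rightarrow> nat))" where
  "wmult k n x y = (\<lambda>j. if j < n then fst x j * fst y (Hilbert_Choice.inv (snd x) j) else 1\<^sub>m k, snd x \<circ> snd y)"

definition wone :: "nat \<Rightarrow> (nat \<Rightarrow> complex mat) \<times> (nat \<Rightarrow> nat)" where
  "wone k = (\<lambda>j. 1\<^sub>m k, id)"

definition winv :: "complex mat set \<Rightarrow> nat \<Rightarrow> nat \<Rightarrow> ((nat \<Rightarrow> complex mat) \<times> (nat \<Rightarrow> nat))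
    \<Rightarrow> ((nat \<Rightarrow> complex mat) \<times> (nat \<Rightarrow> nat))" where
  "winv \<Gamma> k n x = (THE y. y \<in> wreath \<Gamma> k n \<and> wmult k n x y = wone k)"

text \<open>Matrix of (g,sigma) acting on (C^k)^n = C^{kn}: ((g,sigma) x)_j = g_j x_{sigma^{-1} j};
  coordinate a of block j has index j*k + a.\<close>
definition wmat :: "nat \<Rightarrow> nat \<Rightarrow> (nat \<Rightarrow> complex mat) \<times> (nat \<Rightarrow> nat) \<Rightarrow> complex mat" where
  "wmat k n x = mat (k * n) (k * n) (\<lambda>(r, c).
      if c div k = Hilbert_Choice.inv (snd x) (r div k) then fst x (r div k) $$ (r mod k, c mod k) else 0)"

text \<open>Character of the tensor power V^{\<otimes> I} (factors indexed by I) at (g,sigma),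
  where V has basis B and g acts on V by the matrix rho g, Gamma^I acts factorwise and
  sigma permutes the factors: the trace of
  e_b \<mapsto> \<otimes>_j rho(g_j) e_{b (sigma^{-1} j)}.\<close>
definition tensor_char :: "'b set \<Rightarrow> (complex mat \<Rightarrow> 'b \<Rightarrow> 'b \<Rightarrow> complex) \<Rightarrow> nat set
    \<Rightarrow> (nat \<Rightarrow> complex mat) \<times> (nat \<Rightarrow> nat) \<Rightarrow> complex" where
  "tensor_char B \<rho> I x = (\<Sum>a\<in>I \<rightarrow>\<^sub>E B. \<Prod>j\<in>I. \<rho> (fst x j) (a j) (a (Hilbert_Choice.inv (snd x) j)))"

definition restrict_perm :: "(nat \<Rightarrow> nat) \<Rightarrow> nat set \<Rightarrow> nat \<Rightarrow> nat" where
  "restrict_perm \<sigma> I = (\<lambda>j. if j \<in> I then \<sigma> j else j)"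

text \<open>The Young-type subgroup Gamma_{n-m} \<times> Gamma_m of Gamma_n (positions {0..<n-m} and {n-m..<n}).\<close>
definition young_sub :: "complex mat set \<Rightarrow> nat \<Rightarrow> nat \<Rightarrow> nat \<Rightarrow> ((nat \<Rightarrow> complex mat) \<times> (nat \<Rightarrow> nat)) set" where
  "young_sub \<Gamma> k n m = {x \<in> wreath \<Gamma> k n. snd x ` {..<n - m} = {..<n - m}}"

text \<open>eta_{n-m}(beta) \<otimes> epsilon_m(gamma) as a class function on Gamma_{n-m} \<times> Gamma_m.\<close>
definition eta_eps_char :: "nat \<Rightarrow> nat \<Rightarrow> nat \<Rightarrow> (nat \<Rightarrow> complex mat) \<times> (nat \<Rightarrow> nat) \<Rightarrow> complex" where
  "eta_eps_char k n m x =
     tensor_char (even_basis k) wedge_sum_rep {..<n - m} x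
     * of_int (sign (restrict_perm (snd x) {n - m..<n}))
     * tensor_char (odd_basis k) wedge_sum_rep {n - m..<n} x"

definition ind_char :: "'g set \<Rightarrow> ('g \<Rightarrow> 'g \<Rightarrow> 'g) \<Rightarrow> ('g \<Rightarrow> 'g) \<Rightarrow> 'g set \<Rightarrow> ('g \<Rightarrow> complex) \<Rightarrow> 'g \<Rightarrow> complex" where
  "ind_char G gmult ginv H \<chi> x =
     (\<Sum>C\<in>{(\<lambda>h. gmult y h) ` H | y. y \<in> G}.
        let y = (SOME y. y \<in> C); z = gmult (ginv y) (gmult x y) in if z \<in> H then \<chi> z else 0)"

text \<open>eta_n(lambda(pi)) = sum_m (-1)^m Ind [eta_{n-m}(beta) \<otimes> epsilon_m(gamma)].\<close>
definition eta_lambda :: "complex mat set \<Rightarrow> nat \<Rightarrow> nat \<Rightarrow> (nat \<Rightarrow> complex mat) \<times> (nat \<Rightarrow> nat) \<Rightarrow> complex" where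
  "eta_lambda \<Gamma> k n x = (\<Sum>m = 0..n. (-1) ^ m *
      ind_char (wreath \<Gamma> k n) (wmult k n) (winv \<Gamma> k n) (young_sub \<Gamma> k n m) (eta_eps_char k n m) x)"

end

(* For M = wmat k n x, lambda_char M is the signed sum of the principal minors M_S,
   S a subset of {0..<k*n}.  Group the S by the set T of blocks in which S has an odd
   number of elements; call the resulting partial sums G_T.  Since M is block-monomial
   along the permutation sigma of x, M_S vanishes unless the block sizes of S are
   sigma-invariant, and then it factors into minors of the blocks g_j (entries of exterior
   powers of g_j) times the sign of the induced shift of blocks; together with (-1)^|S| that
   sign is (-1)^|T| sgn (sigma restricted to T).  Hence on the Young subgroup
   (-1)^m eta_(n-m)(beta) eps_m(gamma) equals G_{n-m..<n}.  The G_T are the Fourier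
   coefficients of e |-> det (1 - diag e M) on {1,-1}^n, so conjugation in the wreath product
   only relabels T.  The induced character at x is therefore (-1)^m times the sum of G_U over
   the sigma-invariant m-subsets U, while G_U = 0 for non-invariant U; summing over m gives
   lambda_char M. *)

theory Submission
  imports Defs
begin

section \<open>Determinants over finite index sets\<close>

definition det_on :: "('b \<Rightarrow> 'b \<Rightarrow> 'a::comm_ring_1) \<Rightarrow> 'b set \<Rightarrow> 'a" where
  "det_on f S = (\<Sum>p | p permutes S. of_int (sign p) * (\<Prod>i\<in>S. f i (p i)))"

lemma det_on_reindex:
  assumes e: "bij_betw e D S" and fin: "finite D"
  shows "det_on f S = det_on (\<lambda>x y. f (e x) (e y)) D"
proof -
  let ?map = "map_permutation D e"
  have inj: "inj_on e D" using e by (rule bij_betw_imp_inj_on)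
  have e': "bij_betw (inv_into D e) S D" using e by (rule bij_betw_inv_into)
  have bij: "bij_betw ?map {q. q permutes D} {q. q permutes S}"
  proof (rule bij_betwI[where g = "map_permutation S (inv_into D e)"])
    show "?map \<in> {q. q permutes D} \<rightarrow> {q. q permutes S}"
      using map_permutation_permutes[OF e] by auto
    show "map_permutation S (inv_into D e) \<in> {q. q permutes S} \<rightarrow> {q. q permutes D}"
      using map_permutation_permutes[OF e'] by auto
    show "map_permutation S (inv_into D e) (?map q) = q" if "q \<in> {q. q permutes D}" for q
      using map_permutation_compose_inv[OF e, of q "inv_into D e"] that inj
      by (auto simp: inv_into_f_f)
    show "?map (map_permutation S (inv_into D e) q) = q" if "q \<in> {q. q permutes S}" for q
      using map_permutation_compose_inv[OF e', of q e] that e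
      by (auto simp: f_inv_into_f bij_betw_def)
  qed
  have "det_on f S = (\<Sum>q | q permutes D. of_int (sign (?map q)) * (\<Prod>i\<in>S. f i (?map q i)))"
    unfolding det_on_def by (rule sum.reindex_bij_betw[OF bij, symmetric])
  also have "\<dots> = det_on (\<lambda>x y. f (e x) (e y)) D"
    unfolding det_on_def
  proof (rule sum.cong[OF refl])
    fix q assume "q \<in> {q. q permutes D}"
    then have q: "q permutes D" by simp
    have "(\<Prod>i\<in>S. f i (?map q i)) = (\<Prod>x\<in>D. f (e x) (?map q (e x)))"
      using prod.reindex_bij_betw[OF e, of "\<lambda>i. f i (?map q i)"] by simp
    also have "\<dots> = (\<Prod>x\<in>D. f (e x) (e (q x)))"
      by (intro prod.cong refl) (simp add: map_permutation_apply[OF inj])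
    finally show "of_int (sign (?map q)) * (\<Prod>i\<in>S. f i (?map q i)) = of_int (sign q) * (\<Prod>x\<in>D. f (e x) (e (q x)))"
      using sign_map_permutation[OF inj q fin] by simp
  qed
  finally show ?thesis .
qed

lemma det_on_cong:
  assumes "\<And>i j. i \<in> S \<Longrightarrow> j \<in> S \<Longrightarrow> f i j = g i j"
  shows "det_on f S = det_on g S"
  unfolding det_on_def
  by (intro sum.cong refl arg_cong[where f = "\<lambda>x. _ * x"] prod.cong)
     (use assms permutes_in_image in fastforce)

lemma det_on_scale_rows:
  "det_on (\<lambda>i j. l i * f i j) S = (\<Prod>i\<in>S. l i) * det_on f S"
  unfolding det_on_def by (simp add: prod.distrib sum_distrib_left algebra_simps)

definition principal_minor :: "'a::comm_ring_1 mat \<Rightarrow> nat set \<Rightarrow> 'a" where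
  "principal_minor A S = det_on (\<lambda>i j. A $$ (i, j)) S"

lemma wedge_entry_eq_det_on:
  "wedge_entry A S T =
     det_on (\<lambda>r c. A $$ (sorted_list_of_set S ! r, sorted_list_of_set T ! c)) {0..<card S}"
  unfolding wedge_entry_def det_def det_on_def by simp

lemma bij_betw_sorted_list_of_set_nth:
  assumes "finite S"
  shows "bij_betw (\<lambda>i. sorted_list_of_set S ! i) {0..<card S} S"
proof -
  have "bij_betw ((!) (sorted_list_of_set S)) {..<length (sorted_list_of_set S)} (set (sorted_list_of_set S))"
    by (rule bij_betw_nth) auto
  then show ?thesis using assms by (simp add: atLeast0LessThan)
qed

lemma wedge_entry_diag: "finite S \<Longrightarrow> wedge_entry A S S = principal_minor A S"
  unfolding wedge_entry_eq_det_on principal_minor_def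
  by (rule det_on_reindex[OF bij_betw_sorted_list_of_set_nth, symmetric]) simp_all

lemma permutes_fixing_complement:
  assumes "X \<subseteq> A"
  shows "{p. p permutes A \<and> (\<forall>i\<in>A - X. p i = i)} = {p. p permutes X}"
proof safe
  fix p assume p: "p permutes A" "\<forall>i\<in>A - X. p i = i"
  show "p permutes X" unfolding permutes_def
  proof
    show "\<forall>x. x \<notin> X \<longrightarrow> p x = x" using p permutes_not_in by (metis Diff_iff)
    show "\<forall>y. \<exists>!x. p x = y" using p(1) unfolding permutes_def by blast
  qed
next
  fix p assume "p permutes X" then show "p permutes A" using assms permutes_subset by blast
next
  fix p i assume "p permutes X" "i \<in> A" "i \<notin> X" then show "p i = i" using permutes_not_in by metis
qed

lemma det_on_eq_sum_permutes_superset: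
  fixes f :: "'b \<Rightarrow> 'b \<Rightarrow> 'a::comm_ring_1"
  assumes X: "X \<subseteq> A" and A: "finite A"
  shows "(\<Sum>p | p permutes A. of_int (sign p) * (\<Prod>i\<in>X. f i (p i))
            * (\<Prod>i\<in>A - X. if p i = i then 1 else 0)) = det_on f X"
proof -
  have fix_prod: "(\<Prod>i\<in>A - X. if p i = i then 1 else 0 :: 'a)
      = (if \<forall>i\<in>A - X. p i = i then 1 else 0)" for p
    using A by (auto intro!: prod_zero)
  have "(\<Sum>p | p permutes A. of_int (sign p) * (\<Prod>i\<in>X. f i (p i))
            * (\<Prod>i\<in>A - X. if p i = i then 1 else 0))
      = (\<Sum>p\<in>{p. p permutes A}. if \<forall>i\<in>A - X. p i = i
           then of_int (sign p) * (\<Prod>i\<in>X. f i (p i)) else 0)"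
    by (intro sum.cong refl) (simp add: fix_prod)
  also have "\<dots> = (\<Sum>p\<in>{p \<in> {p. p permutes A}. \<forall>i\<in>A - X. p i = i}. of_int (sign p) * (\<Prod>i\<in>X. f i (p i)))"
    by (rule sum.inter_filter[symmetric]) (rule finite_permutations[OF A])
  also have "\<dots> = det_on f X"
    by (simp add: permutes_fixing_complement[OF X] det_on_def)
  finally show ?thesis .
qed

lemma det_one_add_diag_mult:
  fixes M :: "'a::comm_ring_1 mat"
  assumes M: "M \<in> carrier_mat N N"
  shows "det (1\<^sub>m N + mat N N (\<lambda>(i, j). l i * M $$ (i, j)))
       = (\<Sum>S\<in>Pow {0..<N}. (\<Prod>i\<in>S. l i) * principal_minor M S)"
proof -
  let ?A = "{0..<N}"
  have "det (1\<^sub>m N + mat N N (\<lambda>(i, j). l i * M $$ (i, j)))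
      = (\<Sum>p | p permutes ?A. of_int (sign p)
           * (\<Prod>i\<in>?A. l i * M $$ (i, p i) + (if p i = i then 1 else 0)))"
    by (subst det_def'[of _ N], simp, intro sum.cong refl arg_cong[where f = "\<lambda>x. _ * x"] prod.cong)
       (use permutes_in_image in fastforce)
  also have "\<dots> = (\<Sum>p | p permutes ?A. \<Sum>X\<in>Pow ?A. of_int (sign p) * (\<Prod>i\<in>X. l i * M $$ (i, p i))
                       * (\<Prod>i\<in>?A - X. if p i = i then 1 else 0))"
    by (simp add: prod_add sum_distrib_left mult.assoc)
  also have "\<dots> = (\<Sum>X\<in>Pow ?A. det_on (\<lambda>i j. l i * M $$ (i, j)) X)"
    by (subst sum.swap) (intro sum.cong refl det_on_eq_sum_permutes_superset; simp)
  finally show ?thesis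
    by (simp add: det_on_scale_rows principal_minor_def)
qed

lemma lambda_char_eq_sum_principal_minors:
  "lambda_char A = (\<Sum>S\<in>Pow {0..<dim_row A}. (-1) ^ card S * principal_minor A S)"
proof -
  let ?N = "dim_row A"
  have "lambda_char A = (\<Sum>i=0..?N. \<Sum>S\<in>{S\<in>Pow {0..<?N}. card S = i}. (-1) ^ card S * principal_minor A S)"
    unfolding lambda_char_def ext_char_def
  proof (intro sum.cong refl)
    fix i
    have "wedge_entry A S S = principal_minor A S" if "S \<subseteq> {0..<?N}" for S
      using that by (intro wedge_entry_diag) (meson finite_atLeastLessThan finite_subset)
    then show "(-1) ^ i * (\<Sum>S\<in>{S. S \<subseteq> {0..<?N} \<and> card S = i}. wedge_entry A S S)
      = (\<Sum>S\<in>{S\<in>Pow {0..<?N}. card S = i}. (-1) ^ card S * principal_minor A S)"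
      by (simp add: sum_distrib_left Pow_def)
  qed
  also have "\<dots> = (\<Sum>S\<in>Pow {0..<?N}. (-1) ^ card S * principal_minor A S)"
    by (rule sum.group) (auto intro: card_mono[of "{0..<?N}", simplified])
  finally show ?thesis .
qed

section \<open>The wreath product\<close>

text \<open>Plain \<open>inv\<close> denotes the group inverse of HOL-Algebra here.\<close>

abbreviation perm_inv :: "('a \<Rightarrow> 'b) \<Rightarrow> 'b \<Rightarrow> 'a" where
  "perm_inv \<equiv> Hilbert_Choice.inv"

definition subgroup_inv :: "nat \<Rightarrow> complex mat set \<Rightarrow> complex mat \<Rightarrow> complex mat" where
  "subgroup_inv k \<Gamma> A = (SOME B. B \<in> \<Gamma> \<and> A * B = 1\<^sub>m k \<and> B * A = 1\<^sub>m k)"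

definition wreath_inv :: "nat \<Rightarrow> complex mat set \<Rightarrow> nat \<Rightarrow> (nat \<Rightarrow> complex mat) \<times> (nat \<Rightarrow> nat)
    \<Rightarrow> (nat \<Rightarrow> complex mat) \<times> (nat \<Rightarrow> nat)" where
  "wreath_inv k \<Gamma> n y =
     (\<lambda>j. if j < n then subgroup_inv k \<Gamma> (fst y (snd y j)) else 1\<^sub>m k, perm_inv (snd y))"

lemma wreathI:
  assumes "\<And>j. j < n \<Longrightarrow> fst x j \<in> \<Gamma>" "\<And>j. j \<ge> n \<Longrightarrow> fst x j = 1\<^sub>m k" "snd x permutes {..<n}"
  shows "x \<in> wreath \<Gamma> k n"
  using assms unfolding wreath_def by (cases x) auto

lemma wreathD:
  assumes "x \<in> wreath \<Gamma> k n"
  shows "j < n \<Longrightarrow> fst x j \<in> \<Gamma>" "j \<ge> n \<Longrightarrow> fst x j = 1\<^sub>m k" "snd x permutes {..<n}"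
  using assms unfolding wreath_def by auto

lemma permutes_lessThan_iff:
  assumes "\<sigma> permutes {..<n}"
  shows "\<sigma> j < n \<longleftrightarrow> j < n" "perm_inv \<sigma> j < n \<longleftrightarrow> j < n"
  using permutes_in_image[OF assms] permutes_in_image[OF permutes_inv[OF assms]] by simp_all

context
  fixes k :: nat and \<Gamma> :: "complex mat set"
  assumes \<Gamma>: "subgroup_GL k \<Gamma>"
begin

lemma subgroup_GL_carrier: "A \<in> \<Gamma> \<Longrightarrow> A \<in> carrier_mat k k"
  and subgroup_GL_mult: "A \<in> \<Gamma> \<Longrightarrow> B \<in> \<Gamma> \<Longrightarrow> A * B \<in> \<Gamma>"
  and subgroup_GL_one: "1\<^sub>m k \<in> \<Gamma>"
  using \<Gamma> unfolding subgroup_GL_def by auto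

lemma subgroup_inv:
  assumes "A \<in> \<Gamma>"
  shows "subgroup_inv k \<Gamma> A \<in> \<Gamma>" "A * subgroup_inv k \<Gamma> A = 1\<^sub>m k" "subgroup_inv k \<Gamma> A * A = 1\<^sub>m k"
proof -
  have "\<exists>B. B \<in> \<Gamma> \<and> A * B = 1\<^sub>m k \<and> B * A = 1\<^sub>m k" using assms \<Gamma> unfolding subgroup_GL_def by blast
  from someI_ex[OF this]
  show "subgroup_inv k \<Gamma> A \<in> \<Gamma>" "A * subgroup_inv k \<Gamma> A = 1\<^sub>m k" "subgroup_inv k \<Gamma> A * A = 1\<^sub>m k"
    unfolding subgroup_inv_def by auto
qed

lemma wreath_carrier: "x \<in> wreath \<Gamma> k n \<Longrightarrow> j < n \<Longrightarrow> fst x j \<in> carrier_mat k k"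
  using subgroup_GL_carrier wreathD(1) by blast

lemma wmult_closed:
  assumes x: "x \<in> wreath \<Gamma> k n" and y: "y \<in> wreath \<Gamma> k n"
  shows "wmult k n x y \<in> wreath \<Gamma> k n"
proof (rule wreathI)
  have p: "snd x permutes {..<n}" "snd y permutes {..<n}" using wreathD(3) x y by auto
  show "fst (wmult k n x y) j \<in> \<Gamma>" if "j < n" for j
    using that wreathD(1)[OF x] wreathD(1)[OF y] subgroup_GL_mult permutes_lessThan_iff[OF p(1)]
    by (simp add: wmult_def)
  show "snd (wmult k n x y) permutes {..<n}"
    using p by (simp add: wmult_def permutes_compose)
qed (simp add: wmult_def)

lemma wreath_inv_closed:
  assumes y: "y \<in> wreath \<Gamma> k n"
  shows "wreath_inv k \<Gamma> n y \<in> wreath \<Gamma> k n"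
proof (rule wreathI)
  have p: "snd y permutes {..<n}" using wreathD(3)[OF y] .
  show "fst (wreath_inv k \<Gamma> n y) j \<in> \<Gamma>" if "j < n" for j
    using that wreathD(1)[OF y] subgroup_inv(1) permutes_lessThan_iff[OF p]
    by (simp add: wreath_inv_def)
  show "snd (wreath_inv k \<Gamma> n y) permutes {..<n}"
    using p by (simp add: wreath_inv_def permutes_inv)
qed (simp add: wreath_inv_def)

lemma wmult_wreath_inv:
  assumes y: "y \<in> wreath \<Gamma> k n"
  shows "wmult k n y (wreath_inv k \<Gamma> n y) = wone k"
proof -
  have p: "snd y permutes {..<n}" using wreathD(3)[OF y] .
  have "fst (wmult k n y (wreath_inv k \<Gamma> n y)) j = 1\<^sub>m k" for j
    using subgroup_inv(2)[OF wreathD(1)[OF y]] permutes_lessThan_iff[OF p]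
    by (simp add: wmult_def wreath_inv_def permutes_inverses[OF p])
  moreover have "snd (wmult k n y (wreath_inv k \<Gamma> n y)) = id"
    by (simp add: wmult_def wreath_inv_def permutes_inv_o[OF p])
  ultimately show ?thesis unfolding wone_def by (intro prod_eqI ext) auto
qed

lemma wreath_inv_wmult:
  assumes y: "y \<in> wreath \<Gamma> k n"
  shows "wmult k n (wreath_inv k \<Gamma> n y) y = wone k"
proof -
  have p: "snd y permutes {..<n}" using wreathD(3)[OF y] .
  have "fst (wmult k n (wreath_inv k \<Gamma> n y) y) j = 1\<^sub>m k" for j
    using subgroup_inv(3)[OF wreathD(1)[OF y]] permutes_lessThan_iff[OF p]
    by (simp add: wmult_def wreath_inv_def permutes_inv_inv[OF p])
  moreover have "snd (wmult k n (wreath_inv k \<Gamma> n y) y) = id"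
    by (simp add: wmult_def wreath_inv_def permutes_inv_o[OF p])
  ultimately show ?thesis unfolding wone_def by (intro prod_eqI ext) auto
qed

lemma wmult_assoc:
  assumes x: "x \<in> wreath \<Gamma> k n" and y: "y \<in> wreath \<Gamma> k n" and z: "z \<in> wreath \<Gamma> k n"
  shows "wmult k n (wmult k n x y) z = wmult k n x (wmult k n y z)"
proof (rule prod_eqI)
  have px: "snd x permutes {..<n}" and py: "snd y permutes {..<n}" using wreathD(3) x y by auto
  have inv_comp: "perm_inv (snd x \<circ> snd y) = perm_inv (snd y) \<circ> perm_inv (snd x)"
    using px py by (simp add: o_inv_distrib permutes_bij)
  show "fst (wmult k n (wmult k n x y) z) = fst (wmult k n x (wmult k n y z))"
  proof
    fix j
    show "fst (wmult k n (wmult k n x y) z) j = fst (wmult k n x (wmult k n y z)) j"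
    proof (cases "j < n")
      case True
      let ?i = "perm_inv (snd x) j"
      have i: "?i < n" using True permutes_lessThan_iff[OF px] by simp
      then have "perm_inv (snd y) ?i < n" using permutes_lessThan_iff[OF py] by simp
      then show ?thesis
        using True i wreath_carrier[OF x True] wreath_carrier[OF y i] wreath_carrier[OF z]
        by (simp add: wmult_def inv_comp assoc_mult_mat[of _ k k _ k _ k])
    qed (simp add: wmult_def)
  qed
qed (simp add: wmult_def o_assoc)

lemma
  assumes w: "w \<in> wreath \<Gamma> k n"
  shows wone_wmult: "wmult k n (wone k) w = w" and wmult_wone: "wmult k n w (wone k) = w"
proof -
  have "1\<^sub>m k * fst w j = fst w j" "fst w j * 1\<^sub>m k = fst w j" if "j < n" for j
    using wreath_carrier[OF w that] by simp_all
  then show "wmult k n (wone k) w = w" "wmult k n w (wone k) = w"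
    using wreathD(2)[OF w] by (auto intro!: prod_eqI ext simp: wmult_def wone_def)
qed

lemma wmult_wreath_inv_cancel:
  assumes y: "y \<in> wreath \<Gamma> k n" and w: "w \<in> wreath \<Gamma> k n"
  shows "wmult k n y (wmult k n (wreath_inv k \<Gamma> n y) w) = w"
  using wmult_assoc[OF y wreath_inv_closed[OF y] w] wmult_wreath_inv[OF y] wone_wmult[OF w] by simp

lemma winv_eq_wreath_inv:
  assumes y: "y \<in> wreath \<Gamma> k n"
  shows "winv \<Gamma> k n y = wreath_inv k \<Gamma> n y"
  unfolding winv_def
proof (rule the_equality)
  show "wreath_inv k \<Gamma> n y \<in> wreath \<Gamma> k n \<and> wmult k n y (wreath_inv k \<Gamma> n y) = wone k"
    using wreath_inv_closed[OF y] wmult_wreath_inv[OF y] by auto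
  fix z assume "z \<in> wreath \<Gamma> k n \<and> wmult k n y z = wone k"
  then show "z = wreath_inv k \<Gamma> n y"
    using wmult_assoc[OF wreath_inv_closed[OF y] y, of z] wreath_inv_wmult[OF y]
      wone_wmult[of z] wmult_wone[OF wreath_inv_closed[OF y]] by simp
qed

end

lemma wmat_carrier [simp]: "wmat k n x \<in> carrier_mat (k * n) (k * n)"
  and dim_wmat [simp]: "dim_row (wmat k n x) = k * n" "dim_col (wmat k n x) = k * n"
  unfolding wmat_def by simp_all

lemma index_wmat:
  "r < k * n \<Longrightarrow> c < k * n \<Longrightarrow> wmat k n x $$ (r, c) =
     (if c div k = perm_inv (snd x) (r div k) then fst x (r div k) $$ (r mod k, c mod k) else 0)"
  unfolding wmat_def by simp

lemma block_div_less: "r < k * n \<Longrightarrow> r div k < (n::nat)"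
  by (simp add: less_mult_imp_div_less mult.commute)

lemma block_index_less: "j < n \<Longrightarrow> t < k \<Longrightarrow> j * k + t < k * (n::nat)"
proof -
  assume "j < n" "t < k"
  then have "j * k + t < (j + 1) * k" by simp
  also have "\<dots> \<le> n * k" using \<open>j < n\<close> by (intro mult_right_mono) auto
  finally show ?thesis by (simp add: mult.commute)
qed

lemma sum_blocks:
  fixes g :: "nat \<Rightarrow> 'a::comm_monoid_add"
  shows "(\<Sum>l<k * n. g l) = (\<Sum>j<n. \<Sum>t<k. g (j * k + t))"
proof -
  have "(\<Sum>l<k * n. g l) = (\<Sum>j<n. sum g {j * k..<j * k + k})"
    using sum.nat_group[of g k n] by (simp add: mult.commute)
  also have "\<dots> = (\<Sum>j<n. \<Sum>t<k. g (j * k + t))"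
  proof (rule sum.cong[OF refl])
    fix j
    have "{j * k..<j * k + k} = (\<lambda>t. j * k + t) ` {..<k}"
      by (simp add: image_add_atLeastLessThan lessThan_atLeast0 add.commute)
    then show "sum g {j * k..<j * k + k} = (\<Sum>t<k. g (j * k + t))"
      by (simp add: sum.reindex)
  qed
  finally show ?thesis .
qed

lemma wmat_wmult:
  assumes px: "snd x permutes {..<n}" and py: "snd y permutes {..<n}"
    and gx: "\<And>j. j < n \<Longrightarrow> fst x j \<in> carrier_mat k k"
    and gy: "\<And>j. j < n \<Longrightarrow> fst y j \<in> carrier_mat k k"
  shows "wmat k n (wmult k n x y) = wmat k n x * wmat k n y"
proof (rule eq_matI)
  fix r c assume "r < dim_row (wmat k n x * wmat k n y)" "c < dim_col (wmat k n x * wmat k n y)"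
  then have r: "r < k * n" and c: "c < k * n" by simp_all
  define J where "J = r div k"
  define J' where "J' = perm_inv (snd x) J"
  have J: "J < n" using block_div_less[OF r] J_def by simp
  have J': "J' < n" using J permutes_lessThan_iff[OF px] J'_def by simp
  have kpos: "k > 0" using r by (cases k) auto
  have "(wmat k n x * wmat k n y) $$ (r, c) = (\<Sum>l<k * n. wmat k n x $$ (r, l) * wmat k n y $$ (l, c))"
    using r c by (simp add: scalar_prod_def lessThan_atLeast0 index_wmat)
  also have "\<dots> = (\<Sum>j<n. \<Sum>t<k. wmat k n x $$ (r, j * k + t) * wmat k n y $$ (j * k + t, c))"
    by (rule sum_blocks)
  also have "\<dots> = (\<Sum>j<n. if j = J' then (\<Sum>t<k. fst x J $$ (r mod k, t) * wmat k n y $$ (J' * k + t, c)) else 0)"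
    using r block_index_less[of _ n] kpos
    by (intro sum.cong refl) (auto simp: J_def J'_def index_wmat intro!: sum.cong)
  also have "\<dots> = (\<Sum>t<k. fst x J $$ (r mod k, t) * wmat k n y $$ (J' * k + t, c))"
    using J' by simp
  also have "\<dots> = (if c div k = perm_inv (snd y) J'
      then (\<Sum>t<k. fst x J $$ (r mod k, t) * fst y J' $$ (t, c mod k)) else 0)"
    using c block_index_less[OF J'] kpos by (auto simp: index_wmat intro!: sum.cong)
  also have "\<dots> = (if c div k = perm_inv (snd y) J' then (fst x J * fst y J') $$ (r mod k, c mod k) else 0)"
    using gx[OF J] gy[OF J'] kpos by (auto simp: scalar_prod_def lessThan_atLeast0)
  also have "\<dots> = wmat k n (wmult k n x y) $$ (r, c)"
    using r c J px py by (simp add: index_wmat wmult_def J_def J'_def o_inv_distrib permutes_bij)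
  finally show "wmat k n (wmult k n x y) $$ (r, c) = (wmat k n x * wmat k n y) $$ (r, c)" by simp
qed simp_all

lemma div_mod_eq_iff: "c div k = r div k \<and> r mod k = c mod k \<longleftrightarrow> r = (c::nat)"
  by (metis div_mult_mod_eq)

lemma wmat_wone: "wmat k n (wone k) = 1\<^sub>m (k * n)"
proof (rule eq_matI)
  fix r c assume "r < dim_row (1\<^sub>m (k * n))" "c < dim_col (1\<^sub>m (k * n))"
  then have r: "r < k * n" and c: "c < k * n" by auto
  then have "k > 0" by (cases k) auto
  then show "wmat k n (wone k) $$ (r, c) = 1\<^sub>m (k * n) $$ (r, c)"
    using r c div_mod_eq_iff[of c k r] by (auto simp: index_wmat wone_def)
qed simp_all

definition block_scalar :: "nat \<Rightarrow> (nat \<Rightarrow> complex) \<Rightarrow> (nat \<Rightarrow> complex mat) \<times> (nat \<Rightarrow> nat)" where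
  "block_scalar k e = (\<lambda>j. e j \<cdot>\<^sub>m 1\<^sub>m k, id)"

lemma index_wmat_block_scalar:
  "r < k * n \<Longrightarrow> c < k * n \<Longrightarrow> wmat k n (block_scalar k e) $$ (r, c) = (if r = c then e (r div k) else 0)"
proof -
  assume r: "r < k * n" and c: "c < k * n"
  then have "k > 0" by (cases k) auto
  then show ?thesis
    using r c div_mod_eq_iff[of c k r] by (auto simp: index_wmat block_scalar_def)
qed

lemma wmat_block_scalar_mult:
  assumes A: "A \<in> carrier_mat (k * n) (k * n)"
  shows "wmat k n (block_scalar k e) * A = mat (k * n) (k * n) (\<lambda>(i, j). e (i div k) * A $$ (i, j))"
proof (rule eq_matI)
  fix i j assume "i < dim_row (mat (k * n) (k * n) (\<lambda>(i, j). e (i div k) * A $$ (i, j)))"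
     "j < dim_col (mat (k * n) (k * n) (\<lambda>(i, j). e (i div k) * A $$ (i, j)))"
  then have i: "i < k * n" and j: "j < k * n" by auto
  have "(wmat k n (block_scalar k e) * A) $$ (i, j)
      = (\<Sum>l\<in>{0..<k * n}. wmat k n (block_scalar k e) $$ (i, l) * A $$ (l, j))"
    using i j A by (simp add: scalar_prod_def)
  also have "\<dots> = (\<Sum>l\<in>{0..<k * n}. if i = l then e (i div k) * A $$ (l, j) else 0)"
    using i by (intro sum.cong refl) (simp add: index_wmat_block_scalar)
  also have "\<dots> = e (i div k) * A $$ (i, j)"
    using i by simp
  finally show "(wmat k n (block_scalar k e) * A) $$ (i, j)
      = mat (k * n) (k * n) (\<lambda>(i, j). e (i div k) * A $$ (i, j)) $$ (i, j)"
    using i j by simp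
qed (use A in auto)

lemma wmat_block_scalar_cong:
  "(\<And>j. j < n \<Longrightarrow> e j = e' j) \<Longrightarrow> wmat k n (block_scalar k e) = wmat k n (block_scalar k e')"
  by (rule eq_matI) (simp_all add: index_wmat_block_scalar block_div_less)

section \<open>Signs of permutations restricted to invariant sets\<close>

lemma bij_betw_invariant:
  assumes "inj \<sigma>" "\<sigma> ` U = U"
  shows "bij_betw \<sigma> U U"
  using assms inj_on_subset unfolding bij_betw_def by blast

lemma permutation_restrict_id:
  assumes "inj \<sigma>" "\<sigma> ` U = U" "finite U"
  shows "permutation (restrict_id \<sigma> U)"
  using permutes_imp_permutation[OF assms(3) permutes_restrict_id[OF bij_betw_invariant[OF assms(1,2)]]] .

lemma sign_on_Un:
  assumes \<sigma>: "inj \<sigma>" and A: "finite A" "\<sigma> ` A = A" and B: "finite B" "\<sigma> ` B = B"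
    and disj: "A \<inter> B = {}"
  shows "sign_on (A \<union> B) \<sigma> = sign_on A \<sigma> * sign_on B \<sigma>"
proof -
  have "restrict_id \<sigma> (A \<union> B) = restrict_id \<sigma> A \<circ> restrict_id \<sigma> B"
    using B(2) disj by (auto simp: restrict_id_def fun_eq_iff)
  then show ?thesis
    unfolding sign_on_def
    using sign_compose[OF permutation_restrict_id[OF \<sigma> A(2,1)] permutation_restrict_id[OF \<sigma> B(2,1)]]
    by simp
qed

lemma sign_on_perm_inv:
  assumes \<sigma>: "bij \<sigma>" and U: "finite U" "\<sigma> ` U = U"
  shows "sign_on U (perm_inv \<sigma>) = sign_on U \<sigma>"
proof -
  have inj: "inj \<sigma>" and inj': "inj (perm_inv \<sigma>)" using \<sigma> bij_is_inj bij_imp_bij_inv by blast+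
  have U': "perm_inv \<sigma> ` U = U" using U(2) \<sigma> by (metis bij_is_inj image_inv_f_f)
  have "restrict_id (perm_inv \<sigma>) U \<circ> restrict_id \<sigma> U = id"
    using U(2) inj by (auto simp: restrict_id_def fun_eq_iff)
  then have "sign_on U (perm_inv \<sigma>) * sign_on U \<sigma> = 1"
    unfolding sign_on_def
    using sign_compose[OF permutation_restrict_id[OF inj' U' U(1)] permutation_restrict_id[OF inj U(2,1)]]
    by simp
  then show ?thesis by (auto simp: sign_on_def sign_def split: if_splits)
qed

lemma permutes_image_complement:
  assumes "\<sigma> permutes A" "\<sigma> ` X = X"
  shows "\<sigma> ` (A - X) = A - X"
  using assms by (metis image_set_diff permutes_image permutes_inj)

lemma perm_inv_image_invariant:
  assumes "\<sigma> permutes A" "\<sigma> ` X = X"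
  shows "perm_inv \<sigma> ` X = X"
  using assms by (metis image_inv_f_f permutes_inj)

text \<open>\<open>twisted_sign \<sigma> U\<close> is the determinant of \<open>-\<sigma>\<close> acting on the span of \<open>U\<close>.\<close>

definition twisted_sign :: "('a \<Rightarrow> 'a) \<Rightarrow> 'a set \<Rightarrow> int" where
  "twisted_sign \<sigma> U = (-1) ^ card U * sign_on U \<sigma>"

lemma twisted_sign_empty [simp]: "twisted_sign \<sigma> {} = 1"
  by (simp add: twisted_sign_def sign_on_def restrict_id_def id_def[symmetric])

lemma twisted_sign_square: "twisted_sign \<sigma> A * twisted_sign \<sigma> A = 1"
  by (simp add: twisted_sign_def sign_on_def sign_def algebra_simps power_add[symmetric] power_mult_distrib[symmetric])

lemma twisted_sign_Un:
  assumes "inj \<sigma>" "finite A" "\<sigma> ` A = A" "finite B" "\<sigma> ` B = B" "A \<inter> B = {}"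
  shows "twisted_sign \<sigma> (A \<union> B) = twisted_sign \<sigma> A * twisted_sign \<sigma> B"
  using assms sign_on_Un[OF assms] by (simp add: twisted_sign_def card_Un_disjoint power_add)

lemma twisted_sign_symdiff:
  assumes \<sigma>: "inj \<sigma>" and A: "finite A" "\<sigma> ` A = A" and B: "finite B" "\<sigma> ` B = B"
  shows "twisted_sign \<sigma> A * twisted_sign \<sigma> B = twisted_sign \<sigma> ((A - B) \<union> (B - A))"
proof -
  have inv: "\<sigma> ` (A - B) = A - B" "\<sigma> ` (B - A) = B - A" "\<sigma> ` (A \<inter> B) = A \<inter> B"
    using A B image_set_diff[OF \<sigma>] image_Int[OF \<sigma>] by auto
  have fin: "finite (A - B)" "finite (B - A)" "finite (A \<inter> B)" using A B by auto
  have parts: "(A - B) \<union> (A \<inter> B) = A" "(B - A) \<union> (A \<inter> B) = B"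
    and disj: "(A - B) \<inter> (A \<inter> B) = {}" "(B - A) \<inter> (A \<inter> B) = {}" "(A - B) \<inter> (B - A) = {}"
    by auto
  have "twisted_sign \<sigma> A = twisted_sign \<sigma> (A - B) * twisted_sign \<sigma> (A \<inter> B)"
    using twisted_sign_Un[OF \<sigma> fin(1) inv(1) fin(3) inv(3) disj(1)] parts(1) by simp
  moreover have "twisted_sign \<sigma> B = twisted_sign \<sigma> (B - A) * twisted_sign \<sigma> (A \<inter> B)"
    using twisted_sign_Un[OF \<sigma> fin(2) inv(2) fin(3) inv(3) disj(2)] parts(2) by simp
  moreover have "twisted_sign \<sigma> ((A - B) \<union> (B - A)) = twisted_sign \<sigma> (A - B) * twisted_sign \<sigma> (B - A)"
    using twisted_sign_Un[OF \<sigma> fin(1) inv(1) fin(2) inv(2) disj(3)] .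
  ultimately show ?thesis
    using twisted_sign_square[of \<sigma> "A \<inter> B"] by (simp add: algebra_simps)
qed

lemma twisted_sign_perm_inv:
  "bij \<sigma> \<Longrightarrow> finite U \<Longrightarrow> \<sigma> ` U = U \<Longrightarrow> twisted_sign (perm_inv \<sigma>) U = twisted_sign \<sigma> U"
  by (simp add: twisted_sign_def sign_on_perm_inv)

lemma permutes_level_set:
  assumes \<sigma>: "\<sigma> permutes A" "finite A" and d: "\<And>j. j \<in> A \<Longrightarrow> d (\<sigma> j) = d j"
  shows "\<sigma> ` {j\<in>A. P (d j)} = {j\<in>A. P (d j)}"
proof (rule endo_inj_surj)
  show "\<sigma> ` {j\<in>A. P (d j)} \<subseteq> {j\<in>A. P (d j)}" using d permutes_in_image[OF \<sigma>(1)] by auto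
  show "inj_on \<sigma> {j\<in>A. P (d j)}" using permutes_inj_on[OF \<sigma>(1)] .
qed (use \<sigma>(2) in simp)

text \<open>The level sets are nested, so their symmetric differences telescope.\<close>

lemma prod_twisted_sign_levels:
  fixes d :: "'a \<Rightarrow> nat"
  assumes \<sigma>: "\<sigma> permutes A" "finite A" and d: "\<And>j. j \<in> A \<Longrightarrow> d (\<sigma> j) = d j"
  shows "(\<Prod>r<K. twisted_sign \<sigma> {j\<in>A. r < d j}) = twisted_sign \<sigma> {j\<in>A. odd (min (d j) K)}"
proof (induction K)
  case (Suc K)
  have odd_min: "odd (min x (Suc K)) \<longleftrightarrow> odd (min x K) \<noteq> (K < x)" for x :: nat
    by (cases "x \<le> K") (auto simp: min_def le_Suc_eq)
  let ?A = "{j\<in>A. odd (min (d j) K)}" and ?B = "{j\<in>A. K < d j}"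
  have "(?A - ?B) \<union> (?B - ?A) = {j\<in>A. odd (min (d j) (Suc K))}"
    using odd_min by auto
  moreover have "\<sigma> ` ?A = ?A" "\<sigma> ` ?B = ?B"
    using permutes_level_set[of \<sigma> A d "\<lambda>x. odd (min x K)", OF \<sigma> d]
      permutes_level_set[of \<sigma> A d "\<lambda>x. K < x", OF \<sigma> d]
    by simp_all
  ultimately show ?case
    using Suc twisted_sign_symdiff[OF permutes_inj[OF \<sigma>(1)], of ?A ?B] \<sigma>(2) by simp
qed simp

lemma sum_eq_sum_card_levels:
  fixes d :: "'a \<Rightarrow> nat"
  assumes "finite A" "\<And>j. j \<in> A \<Longrightarrow> d j \<le> K"
  shows "(\<Sum>j\<in>A. d j) = (\<Sum>r<K. card {j\<in>A. r < d j})"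
proof -
  have "(\<Sum>j\<in>A. d j) = (\<Sum>j\<in>A. \<Sum>r<K. if r < d j then 1 else 0)"
  proof (rule sum.cong[OF refl])
    fix j assume "j \<in> A"
    then have "{..<K} \<inter> {r. r < d j} = {..<d j}" using assms(2)[of j] by auto
    then show "d j = (\<Sum>r<K. if r < d j then 1 else 0)" by (simp add: sum.If_cases)
  qed
  also have "\<dots> = (\<Sum>r<K. \<Sum>j\<in>A. if r < d j then 1 else 0)" by (rule sum.swap)
  also have "\<dots> = (\<Sum>r<K. card {j\<in>A. r < d j})"
    using assms(1) by (simp add: sum.If_cases Int_def)
  finally show ?thesis .
qed

lemma twisted_sign_odd_levels:
  fixes d :: "'a \<Rightarrow> nat"
  assumes \<sigma>: "\<sigma> permutes A" "finite A" and d: "\<And>j. j \<in> A \<Longrightarrow> d (\<sigma> j) = d j"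
    and K: "\<And>j. j \<in> A \<Longrightarrow> d j \<le> K"
  shows "(-1) ^ (\<Sum>j\<in>A. d j) * (\<Prod>r<K. sign_on {j\<in>A. r < d j} \<sigma>) = twisted_sign \<sigma> {j\<in>A. odd (d j)}"
proof -
  have "(-1) ^ (\<Sum>j\<in>A. d j) * (\<Prod>r<K. sign_on {j\<in>A. r < d j} \<sigma>)
      = (\<Prod>r<K. twisted_sign \<sigma> {j\<in>A. r < d j})"
    by (simp add: sum_eq_sum_card_levels[OF \<sigma>(2) K] power_sum prod.distrib twisted_sign_def)
  also have "\<dots> = twisted_sign \<sigma> {j\<in>A. odd (min (d j) K)}"
    by (rule prod_twisted_sign_levels[of \<sigma> A d, OF \<sigma> d])
  also have "{j\<in>A. odd (min (d j) K)} = {j\<in>A. odd (d j)}"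
    using K by (auto simp: min_absorb1)
  finally show ?thesis .
qed

section \<open>Determinants of block-monomial arrays\<close>

definition fibrewise_perm :: "'i set \<Rightarrow> ('i \<Rightarrow> 'a set) \<Rightarrow> ('i \<Rightarrow> 'a \<Rightarrow> 'a) \<Rightarrow> 'i \<times> 'a \<Rightarrow> 'i \<times> 'a" where
  "fibrewise_perm I E P = restrict_id (\<lambda>(i, a). (i, P i a)) (Sigma I E)"

lemma fibrewise_perm_insert:
  assumes i0: "i0 \<notin> I" and P0: "P i0 permutes E i0"
  shows "fibrewise_perm (insert i0 I) E P = map_permutation (E i0) (Pair i0) (P i0) \<circ> fibrewise_perm I E P"
proof
  let ?lift = "map_permutation (E i0) (Pair i0) (P i0)"
  have inj: "inj_on (Pair i0) (E i0)" by (simp add: inj_on_def)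
  have lift: "?lift permutes {i0} \<times> E i0"
    by (rule map_permutation_permutes[OF _ P0]) (auto simp: bij_betw_def inj)
  fix x :: "'a \<times> 'b"
  obtain i a where x: "x = (i, a)" by (cases x)
  consider "i \<in> I" "a \<in> E i" | "i = i0" "a \<in> E i0" | "x \<notin> Sigma (insert i0 I) E"
    using x by auto
  then show "fibrewise_perm (insert i0 I) E P x = (?lift \<circ> fibrewise_perm I E P) x"
  proof cases
    case 1
    then have "(i, P i a) \<notin> {i0} \<times> E i0" using i0 by auto
    then show ?thesis using 1 permutes_not_in[OF lift] by (simp add: fibrewise_perm_def x)
  next
    case 2
    then show ?thesis
      using i0 map_permutation_apply[OF inj, of a "P i0"] by (simp add: fibrewise_perm_def x)
  next
    case 3
    then have "x \<notin> Sigma I E" "x \<notin> {i0} \<times> E i0" by auto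
    then show ?thesis using 3 permutes_not_in[OF lift] by (simp add: fibrewise_perm_def)
  qed
qed

lemma fibrewise_perm_permutes_sign:
  assumes "finite I" "\<And>i. i \<in> I \<Longrightarrow> finite (E i)" "\<And>i. i \<in> I \<Longrightarrow> P i permutes E i"
  shows "fibrewise_perm I E P permutes Sigma I E \<and> sign (fibrewise_perm I E P) = (\<Prod>i\<in>I. sign (P i))"
  using assms
proof (induction I rule: finite_induct)
  case empty
  have "fibrewise_perm {} E P = id" by (auto simp: fibrewise_perm_def restrict_id_def)
  then show ?case by (simp add: permutes_id id_def)
next
  case (insert i0 I)
  let ?lift = "map_permutation (E i0) (Pair i0) (P i0)"
  have inj: "inj_on (Pair i0) (E i0)" by (simp add: inj_on_def)
  have P0: "P i0 permutes E i0" and fin0: "finite (E i0)" using insert.prems by simp_all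
  have lift: "?lift permutes {i0} \<times> E i0"
    by (rule map_permutation_permutes[OF _ P0]) (auto simp: bij_betw_def inj)
  have IH: "fibrewise_perm I E P permutes Sigma I E" "sign (fibrewise_perm I E P) = (\<Prod>i\<in>I. sign (P i))"
    using insert.IH insert.prems by simp_all
  have finI: "finite (Sigma I E)" using insert.hyps(1) insert.prems(1) by simp
  note eq = fibrewise_perm_insert[of i0 I P E, OF insert.hyps(2) P0]
  have "permutation ?lift" using permutes_imp_permutation[OF _ lift] fin0 by simp
  moreover have "permutation (fibrewise_perm I E P)"
    using permutes_imp_permutation[OF finI IH(1)] .
  ultimately have "sign (fibrewise_perm (insert i0 I) E P) = sign (P i0) * (\<Prod>i\<in>I. sign (P i))"
    unfolding eq by (simp add: sign_compose sign_map_permutation[OF inj P0 fin0] IH(2))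
  moreover have "fibrewise_perm (insert i0 I) E P permutes Sigma (insert i0 I) E"
    unfolding eq by (intro permutes_compose permutes_subset[OF IH(1)] permutes_subset[OF lift]) auto
  ultimately show ?case using insert.hyps by simp
qed

definition level_shift :: "('j \<Rightarrow> 'j) \<Rightarrow> 'j set \<Rightarrow> ('j \<Rightarrow> nat) \<Rightarrow> 'j \<times> nat \<Rightarrow> 'j \<times> nat" where
  "level_shift \<tau> J d = restrict_id (\<lambda>(j, r). (\<tau> j, r)) (Sigma J (\<lambda>j. {0..<d j}))"

lemma level_shift_permutes:
  assumes \<tau>: "\<tau> permutes J" and d: "\<And>j. j \<in> J \<Longrightarrow> d (\<tau> j) = d j"
  shows "level_shift \<tau> J d permutes Sigma J (\<lambda>j. {0..<d j})"
  unfolding level_shift_def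
proof (rule permutes_restrict_id, rule bij_betwI[where g = "\<lambda>(j, r). (perm_inv \<tau> j, r)"])
  have inv: "perm_inv \<tau> j \<in> J \<longleftrightarrow> j \<in> J" "\<tau> j \<in> J \<longleftrightarrow> j \<in> J" for j
    using permutes_in_image[OF permutes_inv[OF \<tau>]] permutes_in_image[OF \<tau>] by simp_all
  have d': "d (perm_inv \<tau> j) = d j" if "j \<in> J" for j
    using d[of "perm_inv \<tau> j"] that inv permutes_inverses(1)[OF \<tau>] by simp
  show "(\<lambda>(j, r). (\<tau> j, r)) \<in> Sigma J (\<lambda>j. {0..<d j}) \<rightarrow> Sigma J (\<lambda>j. {0..<d j})"
    using inv d by auto
  show "(\<lambda>(j, r). (perm_inv \<tau> j, r)) \<in> Sigma J (\<lambda>j. {0..<d j}) \<rightarrow> Sigma J (\<lambda>j. {0..<d j})"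
    using inv d' by auto
qed (auto simp: permutes_inverses[OF \<tau>])

lemma sign_level_shift:
  assumes \<tau>: "\<tau> permutes J" "finite J" and d: "\<And>j. j \<in> J \<Longrightarrow> d (\<tau> j) = d j"
    and K: "\<And>j. j \<in> J \<Longrightarrow> d j \<le> K"
  shows "sign (level_shift \<tau> J d) = (\<Prod>r<K. sign_on {j\<in>J. r < d j} \<tau>)"
proof -
  text \<open>Swapping the coordinates turns the level shift into a fibrewise permutation of the levels.\<close>
  define L where "L r = {j\<in>J. r < d j}" for r
  define F where "F = fibrewise_perm {..<K} L (\<lambda>r. restrict_id \<tau> (L r))"
  have L: "\<tau> ` L r = L r" for r
    unfolding L_def by (rule permutes_level_set[of \<tau> J d, OF \<tau> d])
  have P: "restrict_id \<tau> (L r) permutes L r" for r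
    by (rule permutes_restrict_id[OF bij_betw_invariant[OF permutes_inj[OF \<tau>(1)] L]])
  have F: "F permutes Sigma {..<K} L" "sign F = (\<Prod>r<K. sign_on (L r) \<tau>)"
    using fibrewise_perm_permutes_sign[of "{..<K}" L, OF _ _ P] \<tau>(2)
    by (simp_all add: F_def L_def sign_on_def)
  have inj: "inj_on prod.swap (Sigma {..<K} L)" by (simp add: inj_on_def)
  have "level_shift \<tau> J d = map_permutation (Sigma {..<K} L) prod.swap F"
  proof
    fix x :: "'a \<times> nat"
    obtain j r where x: "x = (j, r)" by (cases x)
    show "level_shift \<tau> J d x = map_permutation (Sigma {..<K} L) prod.swap F x"
    proof (cases "j \<in> J \<and> r < d j")
      case True
      then have "(r, j) \<in> Sigma {..<K} L" using K[of j] by (auto simp: L_def)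
      then have "map_permutation (Sigma {..<K} L) prod.swap F (prod.swap (r, j)) = prod.swap (F (r, j))"
        by (rule map_permutation_apply[OF inj])
      then show ?thesis using True K[of j] by (simp add: x level_shift_def F_def fibrewise_perm_def L_def)
    next
      case False
      then have "x \<notin> prod.swap ` Sigma {..<K} L" by (auto simp: x L_def)
      then show ?thesis using False by (simp add: x level_shift_def map_permutation_def)
    qed
  qed
  then show ?thesis
    using sign_map_permutation[OF inj F(1)] F(2) \<tau>(2) by (simp add: L_def)
qed

lemma fibre_permutes:
  assumes q: "q permutes Sigma I E" and fibres: "\<forall>x\<in>Sigma I E. fst (q x) = fst x"
    and i: "i \<in> I" and fin: "finite (E i)"
  shows "(\<lambda>a. if a \<in> E i then snd (q (i, a)) else a) permutes E i"
proof (rule bij_imp_permutes)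
  let ?fibre = "\<lambda>a. if a \<in> E i then snd (q (i, a)) else a"
  have eq: "q (i, a) = (i, snd (q (i, a)))" if "a \<in> E i" for a
    using fibres that i by (metis prod.collapse fst_conv SigmaI)
  have "q (i, a) \<in> Sigma I E" if "a \<in> E i" for a
    using that i permutes_in_image[OF q] by simp
  then have "snd (q (i, a)) \<in> E i" if "a \<in> E i" for a
    using eq[OF that] that by (metis mem_Sigma_iff)
  then have into: "?fibre ` E i \<subseteq> E i" by auto
  have inj: "inj_on ?fibre (E i)"
  proof (rule inj_onI)
    fix a b assume "a \<in> E i" "b \<in> E i" "?fibre a = ?fibre b"
    then have "q (i, a) = q (i, b)" using eq by (metis (no_types, lifting))
    then show "a = b" using permutes_inj[OF q] by (auto dest: injD)
  qed
  show "bij_betw ?fibre (E i) (E i)"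
    using endo_inj_surj[OF fin into inj] inj by (simp add: bij_betw_def)
qed simp

lemma bij_betw_fibrewise_perm:
  assumes I: "finite I" and finE: "\<And>i. i \<in> I \<Longrightarrow> finite (E i)"
  shows "bij_betw (fibrewise_perm I E) (PiE I (\<lambda>i. {p. p permutes E i}))
           {q. q permutes Sigma I E \<and> (\<forall>x\<in>Sigma I E. fst (q x) = fst x)}"
proof (rule bij_betwI[where g = "\<lambda>q. restrict (\<lambda>i a. if a \<in> E i then snd (q (i, a)) else a) I"])
  let ?FP = "{q. q permutes Sigma I E \<and> (\<forall>x\<in>Sigma I E. fst (q x) = fst x)}"
  let ?fibre = "\<lambda>q i a. if a \<in> E i then snd (q (i, a)) else a"
  show "fibrewise_perm I E \<in> PiE I (\<lambda>i. {p. p permutes E i}) \<rightarrow> ?FP"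
  proof
    fix P assume "P \<in> PiE I (\<lambda>i. {p. p permutes E i})"
    then have "fibrewise_perm I E P permutes Sigma I E"
      using fibrewise_perm_permutes_sign[of I E P, OF I finE] by auto
    then show "fibrewise_perm I E P \<in> ?FP" by (auto simp: fibrewise_perm_def)
  qed
  show "(\<lambda>q. restrict (?fibre q) I) \<in> ?FP \<rightarrow> PiE I (\<lambda>i. {p. p permutes E i})"
  proof
    fix q assume q: "q \<in> ?FP"
    have "?fibre q i permutes E i" if "i \<in> I" for i
      by (intro fibre_permutes) (use q that finE in auto)
    then show "restrict (?fibre q) I \<in> PiE I (\<lambda>i. {p. p permutes E i})" by auto
  qed
  show "restrict (?fibre (fibrewise_perm I E P)) I = P" if P: "P \<in> PiE I (\<lambda>i. {p. p permutes E i})" for P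
  proof
    fix i
    show "restrict (?fibre (fibrewise_perm I E P)) I i = P i"
    proof (cases "i \<in> I")
      case True
      then have Pi: "P i permutes E i" using P by auto
      show ?thesis
      proof
        fix a
        show "restrict (?fibre (fibrewise_perm I E P)) I i a = P i a"
          using True permutes_not_in[OF Pi, of a] by (simp add: fibrewise_perm_def)
      qed
    qed (simp add: PiE_arb[OF P])
  qed
  show "fibrewise_perm I E (restrict (?fibre q) I) = q" if q: "q \<in> ?FP" for q
  proof
    fix x :: "'a \<times> 'b"
    show "fibrewise_perm I E (restrict (?fibre q) I) x = q x"
      using q permutes_not_in[of q "Sigma I E" x]
      by (cases "x \<in> Sigma I E") (auto simp: fibrewise_perm_def intro: prod_eqI)
  qed
qed

lemma bij_betw_block_monomial_perms:
  assumes J: "finite J" and \<tau>: "\<tau> permutes J" and d: "\<And>j. j \<in> J \<Longrightarrow> d (\<tau> j) = d j"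
  defines "D \<equiv> Sigma J (\<lambda>j. {0..<d j})"
  shows "bij_betw (\<lambda>P. level_shift \<tau> J d \<circ> fibrewise_perm J (\<lambda>j. {0..<d j}) P)
           (PiE J (\<lambda>j. {p. p permutes {0..<d j}}))
           {q. q permutes D \<and> (\<forall>x\<in>D. fst (q x) = \<tau> (fst x))}"
proof -
  let ?T = "level_shift \<tau> J d"
  have T: "?T permutes D" unfolding D_def by (rule level_shift_permutes[of \<tau> J d, OF \<tau> d])
  have T_apply: "?T x = (\<tau> (fst x), snd x)" if "x \<in> D" for x
    using that by (auto simp: level_shift_def D_def)
  have shift: "bij_betw ((\<circ>) ?T) {p. p permutes D \<and> (\<forall>x\<in>D. fst (p x) = fst x)}
                             {q. q permutes D \<and> (\<forall>x\<in>D. fst (q x) = \<tau> (fst x))}"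
  proof (rule bij_betwI[where g = "(\<circ>) (perm_inv ?T)"])
    show "(\<circ>) ?T \<in> {p. p permutes D \<and> (\<forall>x\<in>D. fst (p x) = fst x)}
                  \<rightarrow> {q. q permutes D \<and> (\<forall>x\<in>D. fst (q x) = \<tau> (fst x))}"
    proof safe
      fix p assume p: "p permutes D" and pf: "\<forall>x\<in>D. fst (p x) = fst x"
      show "?T \<circ> p permutes D" by (rule permutes_compose[OF p T])
      fix x assume x: "x \<in> D"
      then have "p x \<in> D" using permutes_in_image[OF p] by simp
      then show "fst ((?T \<circ> p) x) = \<tau> (fst x)" using T_apply pf x by simp
    qed
    show "(\<circ>) (perm_inv ?T) \<in> {q. q permutes D \<and> (\<forall>x\<in>D. fst (q x) = \<tau> (fst x))}
                  \<rightarrow> {p. p permutes D \<and> (\<forall>x\<in>D. fst (p x) = fst x)}"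
    proof safe
      fix q assume q: "q permutes D" and qf: "\<forall>x\<in>D. fst (q x) = \<tau> (fst x)"
      show "perm_inv ?T \<circ> q permutes D" by (rule permutes_compose[OF q permutes_inv[OF T]])
      fix x assume x: "x \<in> D"
      have "q x \<in> D" using permutes_in_image[OF q] x by simp
      moreover have "fst (q x) = \<tau> (fst x)" using qf x by simp
      ultimately have "fst x \<in> J" "snd (q x) < d (\<tau> (fst x))"
        using x by (auto simp: D_def mem_Sigma_iff[of "q x", unfolded prod.collapse])
      then have "(fst x, snd (q x)) \<in> D" using d by (simp add: D_def)
      moreover have "q x = ?T (fst x, snd (q x))"
        using calculation qf x T_apply by (metis fst_conv snd_conv prod.collapse)
      ultimately show "fst ((perm_inv ?T \<circ> q) x) = fst x"
        using permutes_inverses(2)[OF T] by (metis comp_apply fst_conv)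
    qed
  qed (auto simp: o_assoc permutes_inv_o[OF T])
  note fibrewise = bij_betw_fibrewise_perm[of J "\<lambda>j. {0..<d j}", OF J finite_atLeastLessThan]
  from bij_betw_trans[OF fibrewise shift[unfolded D_def]]
  show ?thesis by (simp add: D_def comp_def)
qed

lemma prod_block_monomial_eq_0:
  fixes f :: "'j \<times> 'b \<Rightarrow> 'j \<times> 'b \<Rightarrow> 'a::comm_ring_1"
  assumes f: "\<And>x y. x \<in> D \<Longrightarrow> y \<in> D \<Longrightarrow> fst y \<noteq> \<tau> (fst x) \<Longrightarrow> f x y = 0"
    and D: "finite D" and q: "q permutes D" and x: "x \<in> D" "fst (q x) \<noteq> \<tau> (fst x)"
  shows "(\<Prod>x\<in>D. f x (q x)) = 0"
proof -
  have "f x (q x) = 0" using f[OF x(1) _ x(2)] permutes_in_image[OF q, of x] x(1) by simp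
  then show ?thesis by (rule prod_zero[OF D bexI[OF _ x(1)]])
qed

lemma fibre_shift_balanced:
  fixes d :: "'j \<Rightarrow> nat"
  assumes J: "finite J" and \<tau>: "\<tau> permutes J" and q: "q permutes Sigma J (\<lambda>j. {0..<d j})"
    and shift: "\<And>x. x \<in> Sigma J (\<lambda>j. {0..<d j}) \<Longrightarrow> fst (q x) = \<tau> (fst x)"
  shows "d (\<tau> j) = d j"
proof -
  define D where "D = Sigma J (\<lambda>j. {0..<d j})"
  text \<open>\<open>q\<close> maps each fibre injectively into the fibre over its image under \<open>\<tau>\<close>.\<close>
  have le: "d j \<le> d (\<tau> j)" if j: "j \<in> J" for j
  proof -
    have "inj_on (\<lambda>r. snd (q (j, r))) {0..<d j}"
    proof (rule inj_onI)
      fix r r' assume "r \<in> {0..<d j}" "r' \<in> {0..<d j}" "snd (q (j, r)) = snd (q (j, r'))"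
      then have "q (j, r) = q (j, r')" using shift j by (intro prod_eqI) auto
      then show "r = r'" using permutes_inj[OF q] by (auto dest: injD)
    qed
    moreover have "(\<lambda>r. snd (q (j, r))) ` {0..<d j} \<subseteq> {0..<d (\<tau> j)}"
    proof clarify
      fix r assume r: "r \<in> {0..<d j}"
      then have "q (j, r) \<in> D" "fst (q (j, r)) = \<tau> j"
        using j shift[of "(j, r)"] permutes_in_image[OF q] by (auto simp: D_def)
      then show "snd (q (j, r)) \<in> {0..<d (\<tau> j)}"
        by (auto simp: D_def mem_Sigma_iff[of "q (j, r)", unfolded prod.collapse])
    qed
    ultimately have "card {0..<d j} \<le> card {0..<d (\<tau> j)}" by (intro card_inj_on_le) auto
    then show ?thesis by simp
  qed
  have "(\<Sum>j\<in>J. d j) = (\<Sum>j\<in>J. d (\<tau> j))"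
    using sum.permute[OF \<tau>, of d] by (simp add: comp_def)
  then have "d j = d (\<tau> j)" if "j \<in> J" for j
    using sum_mono_inv[of "\<lambda>j. d j" J "\<lambda>j. d (\<tau> j)"] le J that by blast
  then show ?thesis using permutes_not_in[OF \<tau>, of j] by (cases "j \<in> J") auto
qed

lemma level_shift_fibrewise_perm_apply:
  assumes "j \<in> J" "r < d j" "P j permutes {0..<d j}"
  shows "level_shift \<tau> J d (fibrewise_perm J (\<lambda>j. {0..<d j}) P (j, r)) = (\<tau> j, P j r)"
proof -
  have "P j r < d j" using assms permutes_in_image by fastforce
  then show ?thesis using assms by (simp add: level_shift_def fibrewise_perm_def)
qed

lemma det_on_block_monomial:
  fixes f :: "'j \<times> nat \<Rightarrow> 'j \<times> nat \<Rightarrow> 'a::comm_ring_1"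
  assumes J: "finite J" and \<tau>: "\<tau> permutes J" and d: "\<And>j. j \<in> J \<Longrightarrow> d (\<tau> j) = d j"
    and f: "\<And>x y. x \<in> Sigma J (\<lambda>j. {0..<d j}) \<Longrightarrow> y \<in> Sigma J (\<lambda>j. {0..<d j})
              \<Longrightarrow> fst y \<noteq> \<tau> (fst x) \<Longrightarrow> f x y = 0"
  shows "det_on f (Sigma J (\<lambda>j. {0..<d j}))
       = of_int (sign (level_shift \<tau> J d)) * (\<Prod>j\<in>J. det_on (\<lambda>r s. f (j, r) (\<tau> j, s)) {0..<d j})"
proof -
  define D where "D = Sigma J (\<lambda>j. {0..<d j})"
  define T where "T = level_shift \<tau> J d"
  define F where "F q = of_int (sign q) * (\<Prod>x\<in>D. f x (q x))" for q
  let ?PP = "PiE J (\<lambda>j. {p. p permutes {0..<d j}})"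
  have finD: "finite D" using J by (simp add: D_def)
  have T: "T permutes D" unfolding T_def D_def by (rule level_shift_permutes[of \<tau> J d, OF \<tau> d])
  have "det_on f D = (\<Sum>q\<in>{q. q permutes D \<and> (\<forall>x\<in>D. fst (q x) = \<tau> (fst x))}. F q)"
    unfolding det_on_def F_def
  proof (rule sum.mono_neutral_right)
    show "\<forall>q\<in>{q. q permutes D} - {q. q permutes D \<and> (\<forall>x\<in>D. fst (q x) = \<tau> (fst x))}.
        of_int (sign q) * (\<Prod>x\<in>D. f x (q x)) = 0"
      using prod_block_monomial_eq_0[OF f[folded D_def] finD] by fastforce
  qed (auto simp: finD finite_permutations)
  also have "\<dots> = (\<Sum>P\<in>?PP. F (T \<circ> fibrewise_perm J (\<lambda>j. {0..<d j}) P))"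
    unfolding T_def D_def
    by (rule sum.reindex_bij_betw[OF bij_betw_block_monomial_perms[of J \<tau> d, OF J \<tau> d], symmetric])
  also have "\<dots> = (\<Sum>P\<in>?PP. of_int (sign T) * (\<Prod>j\<in>J. of_int (sign (P j)) * (\<Prod>r\<in>{0..<d j}. f (j, r) (\<tau> j, P j r))))"
  proof (rule sum.cong[OF refl])
    fix P assume P: "P \<in> ?PP"
    let ?fib = "fibrewise_perm J (\<lambda>j. {0..<d j}) P"
    have fib: "?fib permutes D" "sign ?fib = (\<Prod>j\<in>J. sign (P j))"
      using fibrewise_perm_permutes_sign[of J "\<lambda>j. {0..<d j}" P] J P by (auto simp: D_def)
    have sgn: "sign (T \<circ> ?fib) = sign T * (\<Prod>j\<in>J. sign (P j))"
      using sign_compose permutes_imp_permutation[OF finD] T fib by metis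
    have "P j permutes {0..<d j}" if "j \<in> J" for j using P that by auto
    then have "(\<Prod>x\<in>D. f x ((T \<circ> ?fib) x)) = (\<Prod>x\<in>D. f x (\<tau> (fst x), P (fst x) (snd x)))"
      by (intro prod.cong refl) (auto simp: D_def T_def level_shift_fibrewise_perm_apply)
    moreover have "\<dots> = (\<Prod>j\<in>J. \<Prod>r\<in>{0..<d j}. f (j, r) (\<tau> j, P j r))"
      unfolding D_def using J by (simp add: prod.Sigma split_beta)
    ultimately show "F (T \<circ> ?fib) = of_int (sign T) * (\<Prod>j\<in>J. of_int (sign (P j)) * (\<Prod>r\<in>{0..<d j}. f (j, r) (\<tau> j, P j r)))"
      by (simp add: F_def prod.distrib sgn)
  qed
  also have "\<dots> = of_int (sign T) * (\<Prod>j\<in>J. det_on (\<lambda>r s. f (j, r) (\<tau> j, s)) {0..<d j})"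
    unfolding det_on_def by (simp add: prod_sum_PiE[OF J] sum_distrib_left finite_permutations)
  finally show ?thesis unfolding D_def T_def .
qed

lemma det_on_block_monomial_unbalanced:
  fixes f :: "'j \<times> nat \<Rightarrow> 'j \<times> nat \<Rightarrow> 'a::comm_ring_1"
  assumes J: "finite J" and \<tau>: "\<tau> permutes J" and unbalanced: "d (\<tau> j) \<noteq> d j"
    and f: "\<And>x y. x \<in> Sigma J (\<lambda>j. {0..<d j}) \<Longrightarrow> y \<in> Sigma J (\<lambda>j. {0..<d j})
              \<Longrightarrow> fst y \<noteq> \<tau> (fst x) \<Longrightarrow> f x y = 0"
  shows "det_on f (Sigma J (\<lambda>j. {0..<d j})) = 0"
proof -
  have "(\<Prod>x\<in>Sigma J (\<lambda>j. {0..<d j}). f x (q x)) = 0" if q: "q permutes Sigma J (\<lambda>j. {0..<d j})" for q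
    using fibre_shift_balanced[OF J \<tau> q] unbalanced prod_block_monomial_eq_0[OF f _ q] J by fastforce
  then show ?thesis by (simp add: det_on_def)
qed

lemma twisted_sign_level_shift:
  assumes \<tau>: "\<tau> permutes J" "finite J" and d: "\<And>j. j \<in> J \<Longrightarrow> d (\<tau> j) = d j"
  shows "(-1) ^ (\<Sum>j\<in>J. d j) * sign (level_shift \<tau> J d) = twisted_sign \<tau> {j\<in>J. odd (d j)}"
proof -
  have K: "d j \<le> (\<Sum>j\<in>J. d j)" if "j \<in> J" for j
    using member_le_sum[of j J d] that \<tau>(2) by simp
  show ?thesis
    using sign_level_shift[of \<tau> J d, OF \<tau> d K] twisted_sign_odd_levels[of \<tau> J d, OF \<tau> d K]
    by simp
qed

section \<open>Principal minors of \<open>wmat\<close>\<close>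

definition block_part :: "nat \<Rightarrow> nat set \<Rightarrow> nat \<Rightarrow> nat set" where
  "block_part k S j = {r. r < k \<and> j * k + r \<in> S}"

definition odd_blocks :: "nat \<Rightarrow> nat \<Rightarrow> nat set \<Rightarrow> nat set" where
  "odd_blocks k n S = {j. j < n \<and> odd (card (block_part k S j))}"

definition block_enum :: "nat \<Rightarrow> nat set \<Rightarrow> nat \<times> nat \<Rightarrow> nat" where
  "block_enum k S x = fst x * k + sorted_list_of_set (block_part k S (fst x)) ! snd x"

lemma block_part_subset: "block_part k S j \<subseteq> {0..<k}"
  by (auto simp: block_part_def)

lemma finite_block_part [simp]: "finite (block_part k S j)"
  using finite_subset[OF block_part_subset] by blast

lemma block_part_nth:
  assumes "r < card (block_part k S j)"
  shows "sorted_list_of_set (block_part k S j) ! r \<in> block_part k S j"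
    and "sorted_list_of_set (block_part k S j) ! r < k"
  using assms bij_betw_apply[OF bij_betw_sorted_list_of_set_nth[OF finite_block_part]]
  by (auto simp: block_part_def)

lemma block_enum_div_mod:
  assumes "r < card (block_part k S j)"
  shows "block_enum k S (j, r) div k = j"
    and "block_enum k S (j, r) mod k = sorted_list_of_set (block_part k S j) ! r"
  using block_part_nth(2)[OF assms] by (simp_all add: block_enum_def)

lemma bij_betw_block_enum:
  assumes S: "S \<subseteq> {0..<k * n}"
  shows "bij_betw (block_enum k S) (Sigma {..<n} (\<lambda>j. {0..<card (block_part k S j)})) S"
proof (rule bij_betw_imageI)
  let ?nth = "\<lambda>j. (!) (sorted_list_of_set (block_part k S j))"
  have nth: "bij_betw (?nth j) {0..<card (block_part k S j)} (block_part k S j)" for j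
    by (rule bij_betw_sorted_list_of_set_nth[OF finite_block_part])
  show "inj_on (block_enum k S) (Sigma {..<n} (\<lambda>j. {0..<card (block_part k S j)}))"
  proof (rule inj_onI, clarsimp)
    fix j r j' r'
    assume r: "r < card (block_part k S j)" and r': "r' < card (block_part k S j')"
      and eq: "block_enum k S (j, r) = block_enum k S (j', r')"
    have "j = j'" using block_enum_div_mod(1)[OF r] block_enum_div_mod(1)[OF r'] eq by metis
    moreover have "?nth j r = ?nth j r'"
      using block_enum_div_mod(2)[OF r] block_enum_div_mod(2)[OF r'] eq calculation by metis
    ultimately show "j = j' \<and> r = r'"
      using r r' inj_onD[OF bij_betw_imp_inj_on[OF nth[of j']]] by auto
  qed
  show "block_enum k S ` Sigma {..<n} (\<lambda>j. {0..<card (block_part k S j)}) = S"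
  proof
    show "block_enum k S ` Sigma {..<n} (\<lambda>j. {0..<card (block_part k S j)}) \<subseteq> S"
      using block_part_nth(1) by (auto simp: block_enum_def block_part_def)
    show "S \<subseteq> block_enum k S ` Sigma {..<n} (\<lambda>j. {0..<card (block_part k S j)})"
    proof
      fix i assume i: "i \<in> S"
      then have "i < k * n" using S by auto
      then have kpos: "k > 0" and j: "i div k < n" by (auto simp: block_div_less intro: gr0I)
      have "i mod k \<in> block_part k S (i div k)" using i kpos by (simp add: block_part_def mult.commute)
      then obtain r where r: "r < card (block_part k S (i div k))" "?nth (i div k) r = i mod k"
        using nth[of "i div k"] unfolding bij_betw_def by (metis (no_types, lifting) atLeastLessThan_iff imageE)
      then have "block_enum k S (i div k, r) = i" by (simp add: block_enum_def mult.commute)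
      then show "i \<in> block_enum k S ` Sigma {..<n} (\<lambda>j. {0..<card (block_part k S j)})"
        using j r(1) by force
    qed
  qed
qed

lemma wmat_block_enum:
  assumes S: "S \<subseteq> {0..<k * n}"
    and x: "x \<in> Sigma {..<n} (\<lambda>j. {0..<card (block_part k S j)})"
    and y: "y \<in> Sigma {..<n} (\<lambda>j. {0..<card (block_part k S j)})"
  shows "wmat k n w $$ (block_enum k S x, block_enum k S y) =
    (if fst y = perm_inv (snd w) (fst x)
     then fst w (fst x) $$ (sorted_list_of_set (block_part k S (fst x)) ! snd x,
                            sorted_list_of_set (block_part k S (fst y)) ! snd y)
     else 0)"
proof -
  have "block_enum k S x \<in> S" "block_enum k S y \<in> S"
    using bij_betw_apply[OF bij_betw_block_enum[OF S]] x y by auto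
  then have "block_enum k S x < k * n" "block_enum k S y < k * n" using S by auto
  moreover obtain j r j' r' where xy: "x = (j, r)" "y = (j', r')"
    and r: "r < card (block_part k S j)" and r': "r' < card (block_part k S j')"
    using x y by auto
  ultimately show ?thesis
    by (simp only: index_wmat block_enum_div_mod[OF r] block_enum_div_mod[OF r'] xy fst_conv snd_conv)
qed

lemma principal_minor_eq_det_on_blocks:
  assumes "S \<subseteq> {0..<k * n}"
  shows "principal_minor A S = det_on (\<lambda>x y. A $$ (block_enum k S x, block_enum k S y))
                                  (Sigma {..<n} (\<lambda>j. {0..<card (block_part k S j)}))"
  unfolding principal_minor_def by (rule det_on_reindex[OF bij_betw_block_enum[OF assms]]) simp

lemma twisted_sign_odd_blocks:
  assumes S: "S \<subseteq> {0..<k * n}" and \<sigma>: "snd w permutes {..<n}"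
    and balanced: "\<And>j. j < n \<Longrightarrow> card (block_part k S (perm_inv (snd w) j)) = card (block_part k S j)"
  shows "(-1) ^ card S * sign (level_shift (perm_inv (snd w)) {..<n} (\<lambda>j. card (block_part k S j)))
       = twisted_sign (snd w) (odd_blocks k n S)"
proof -
  define \<tau> where "\<tau> = perm_inv (snd w)"
  define d where "d = (\<lambda>j. card (block_part k S j))"
  have \<tau>: "\<tau> permutes {..<n}" using permutes_inv[OF \<sigma>] by (simp add: \<tau>_def)
  have d: "d (\<tau> j) = d j" if "j \<in> {..<n}" for j using balanced that by (simp add: \<tau>_def d_def)
  have card: "card S = (\<Sum>j<n. d j)"
    using bij_betw_same_card[OF bij_betw_block_enum[OF S]] by (simp add: d_def)
  have odd: "{j \<in> {..<n}. odd (d j)} = odd_blocks k n S"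
    by (auto simp: odd_blocks_def d_def)
  have "\<tau> ` odd_blocks k n S = odd_blocks k n S"
    unfolding odd[symmetric] by (rule permutes_level_set[of \<tau> "{..<n}" d odd, OF \<tau> _ d]) simp_all
  then have "snd w ` odd_blocks k n S = snd w ` \<tau> ` odd_blocks k n S" by simp
  also have "\<dots> = odd_blocks k n S"
    using permutes_inverses(1)[OF \<sigma>] by (simp add: image_image \<tau>_def)
  finally show ?thesis
    using twisted_sign_level_shift[of \<tau> "{..<n}" d, OF \<tau> _ d] card
      twisted_sign_perm_inv[OF permutes_bij[OF \<sigma>], of "odd_blocks k n S"]
    by (simp add: \<tau>_def d_def odd_blocks_def)
qed

lemma principal_minor_wmat_balanced:
  assumes S: "S \<subseteq> {0..<k * n}" and \<sigma>: "snd w permutes {..<n}"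
    and balanced: "\<And>j. j < n \<Longrightarrow> card (block_part k S (perm_inv (snd w) j)) = card (block_part k S j)"
  shows "(-1) ^ card S * principal_minor (wmat k n w) S
       = of_int (twisted_sign (snd w) (odd_blocks k n S))
         * (\<Prod>j<n. wedge_entry (fst w j) (block_part k S j) (block_part k S (perm_inv (snd w) j)))"
proof -
  define \<tau> where "\<tau> = perm_inv (snd w)"
  define d where "d = (\<lambda>j. card (block_part k S j))"
  define f where "f x y = wmat k n w $$ (block_enum k S x, block_enum k S y)" for x y
  have \<tau>: "\<tau> permutes {..<n}" using permutes_inv[OF \<sigma>] by (simp add: \<tau>_def)
  have d: "d (\<tau> j) = d j" if "j \<in> {..<n}" for j using balanced that by (simp add: \<tau>_def d_def)
  have "principal_minor (wmat k n w) S = det_on f (Sigma {..<n} (\<lambda>j. {0..<d j}))"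
    unfolding principal_minor_eq_det_on_blocks[OF S] f_def d_def ..
  also have "\<dots> = of_int (sign (level_shift \<tau> {..<n} d)) * (\<Prod>j<n. det_on (\<lambda>r s. f (j, r) (\<tau> j, s)) {0..<d j})"
    by (rule det_on_block_monomial[of "{..<n}" \<tau> d, OF _ \<tau> d])
       (auto simp: f_def wmat_block_enum[OF S] \<tau>_def d_def)
  also have "(\<Prod>j<n. det_on (\<lambda>r s. f (j, r) (\<tau> j, s)) {0..<d j})
      = (\<Prod>j<n. wedge_entry (fst w j) (block_part k S j) (block_part k S (\<tau> j)))"
  proof (intro prod.cong refl)
    fix j assume j: "j \<in> {..<n}"
    have "f (j, r) (\<tau> j, s) = fst w j $$ (sorted_list_of_set (block_part k S j) ! r,
                                          sorted_list_of_set (block_part k S (\<tau> j)) ! s)"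
      if "r \<in> {0..<d j}" "s \<in> {0..<d j}" for r s
      using that j d[OF j] permutes_lessThan_iff[OF \<tau>] by (simp add: f_def wmat_block_enum[OF S] \<tau>_def d_def)
    then show "det_on (\<lambda>r s. f (j, r) (\<tau> j, s)) {0..<d j}
        = wedge_entry (fst w j) (block_part k S j) (block_part k S (\<tau> j))"
      unfolding wedge_entry_eq_det_on d_def by (rule det_on_cong)
  qed
  moreover have "(-1) ^ card S * (of_int (sign (level_shift \<tau> {..<n} d)) :: complex)
      = of_int (twisted_sign (snd w) (odd_blocks k n S))"
    using twisted_sign_odd_blocks[OF S \<sigma> balanced, folded \<tau>_def d_def]
    by (metis of_int_hom.hom_mult of_int_hom.hom_power of_int_hom.hom_one of_int_hom.hom_uminus)
  ultimately show ?thesis by (simp add: mult.assoc[symmetric] \<tau>_def)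
qed

lemma principal_minor_wmat_unbalanced:
  assumes S: "S \<subseteq> {0..<k * n}" and \<sigma>: "snd w permutes {..<n}"
    and unbalanced: "card (block_part k S (perm_inv (snd w) j)) \<noteq> card (block_part k S j)"
  shows "principal_minor (wmat k n w) S = 0"
  unfolding principal_minor_eq_det_on_blocks[OF S]
  by (rule det_on_block_monomial_unbalanced[where j = j, OF _ permutes_inv[OF \<sigma>]])
     (use unbalanced in \<open>auto simp: wmat_block_enum[OF S]\<close>)

lemma principal_minor_wmat:
  assumes S: "S \<subseteq> {0..<k * n}" and \<sigma>: "snd w permutes {..<n}"
  shows "(-1) ^ card S * principal_minor (wmat k n w) S
       = of_int (twisted_sign (snd w) (odd_blocks k n S))
         * (\<Prod>j<n. wedge_sum_rep (fst w j) (block_part k S j) (block_part k S (perm_inv (snd w) j)))"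
proof (cases "\<forall>j<n. card (block_part k S (perm_inv (snd w) j)) = card (block_part k S j)")
  case True
  then show ?thesis
    using principal_minor_wmat_balanced[OF S \<sigma>] by (simp add: wedge_sum_rep_def)
next
  case False
  then obtain j where j: "j < n" "card (block_part k S (perm_inv (snd w) j)) \<noteq> card (block_part k S j)"
    by blast
  then have "(\<Prod>j<n. wedge_sum_rep (fst w j) (block_part k S j) (block_part k S (perm_inv (snd w) j))) = 0"
    by (intro prod_zero bexI[of _ j]) (auto simp: wedge_sum_rep_def)
  then show ?thesis using principal_minor_wmat_unbalanced[OF S \<sigma> j(2)] by simp
qed

section \<open>Parity sums of principal minors\<close>

definition parity_minor_sum :: "nat \<Rightarrow> nat \<Rightarrow> 'a::comm_ring_1 mat \<Rightarrow> nat set \<Rightarrow> 'a" where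
  "parity_minor_sum k n A T =
     (\<Sum>S\<in>{S\<in>Pow {0..<k * n}. odd_blocks k n S = T}. (-1) ^ card S * principal_minor A S)"

lemma lambda_char_eq_sum_parity_minor_sums:
  assumes "dim_row A = k * n"
  shows "lambda_char A = (\<Sum>T\<in>Pow {..<n}. parity_minor_sum k n A T)"
  unfolding lambda_char_eq_sum_principal_minors assms parity_minor_sum_def
  by (rule sum.group[symmetric]) (auto simp: odd_blocks_def)

lemma card_block_part:
  assumes S: "S \<subseteq> {0..<k * n}"
  shows "card (block_part k S j) = card {i\<in>S. i div k = j}"
proof (rule bij_betw_same_card, rule bij_betwI[where g = "\<lambda>i. i mod k"])
  show "(\<lambda>r. j * k + r) \<in> block_part k S j \<rightarrow> {i\<in>S. i div k = j}"
    by (auto simp: block_part_def)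
  show "(\<lambda>i. i mod k) \<in> {i\<in>S. i div k = j} \<rightarrow> block_part k S j"
  proof clarify
    fix i assume i: "i \<in> S" "j = i div k"
    then have "k > 0" using S by (cases k) auto
    then show "i mod k \<in> block_part k S (i div k)" using i by (simp add: block_part_def mult.commute)
  qed
qed (auto simp: block_part_def mult.commute)

lemma prod_odd_blocks:
  assumes S: "S \<subseteq> {0..<k * n}" and e: "\<And>j. j < n \<Longrightarrow> e j \<in> {1, -1::'a::comm_ring_1}"
  shows "(\<Prod>i\<in>S. e (i div k)) = (\<Prod>j\<in>odd_blocks k n S. e j)"
proof -
  have "(\<Prod>i\<in>S. e (i div k)) = (\<Prod>j<n. \<Prod>i\<in>{i\<in>S. i div k = j}. e (i div k))"
    using S block_div_less by (intro prod.group[symmetric]) (auto intro: finite_subset)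
  also have "\<dots> = (\<Prod>j<n. if j \<in> odd_blocks k n S then e j else 1)"
  proof (intro prod.cong refl)
    fix j assume "j \<in> {..<n}"
    then have "e j ^ c = (if odd c then e j else 1)" for c using e[of j] by (auto simp: power_minus')
    then show "(\<Prod>i\<in>{i\<in>S. i div k = j}. e (i div k)) = (if j \<in> odd_blocks k n S then e j else 1)"
      using \<open>j \<in> {..<n}\<close> by (simp add: card_block_part[OF S, symmetric] odd_blocks_def)
  qed
  also have "\<dots> = (\<Prod>j\<in>odd_blocks k n S. e j)"
    by (simp add: prod.If_cases odd_blocks_def Int_def)
  finally show ?thesis .
qed

lemma det_one_minus_block_scalar_mult:
  assumes M: "M \<in> carrier_mat (k * n) (k * n)" and e: "\<And>j. j < n \<Longrightarrow> e j \<in> {1, -1}"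
  shows "det (1\<^sub>m (k * n) - wmat k n (block_scalar k e) * M)
       = (\<Sum>T\<in>Pow {..<n}. (\<Prod>j\<in>T. e j) * parity_minor_sum k n M T)"
proof -
  have "1\<^sub>m (k * n) - wmat k n (block_scalar k e) * M
      = 1\<^sub>m (k * n) + mat (k * n) (k * n) (\<lambda>(i, j). - e (i div k) * M $$ (i, j))"
    unfolding wmat_block_scalar_mult[OF M] by (rule eq_matI) auto
  then have "det (1\<^sub>m (k * n) - wmat k n (block_scalar k e) * M)
      = (\<Sum>S\<in>Pow {0..<k * n}. (\<Prod>i\<in>S. - e (i div k)) * principal_minor M S)"
    using det_one_add_diag_mult[OF M, of "\<lambda>i. - e (i div k)"] by simp
  also have "\<dots> = (\<Sum>S\<in>Pow {0..<k * n}. (\<Prod>j\<in>odd_blocks k n S. e j) * ((-1) ^ card S * principal_minor M S))"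
  proof (rule sum.cong[OF refl])
    fix S assume "S \<in> Pow {0..<k * n}"
    then have "(\<Prod>i\<in>S. - e (i div k)) = (-1) ^ card S * (\<Prod>j\<in>odd_blocks k n S. e j)"
      using prod_odd_blocks[of S k n e] e by (simp add: prod_uminus)
    then show "(\<Prod>i\<in>S. - e (i div k)) * principal_minor M S
        = (\<Prod>j\<in>odd_blocks k n S. e j) * ((-1) ^ card S * principal_minor M S)"
      by simp
  qed
  also have "\<dots> = (\<Sum>T\<in>Pow {..<n}. \<Sum>S\<in>{S\<in>Pow {0..<k * n}. odd_blocks k n S = T}.
                      (\<Prod>j\<in>odd_blocks k n S. e j) * ((-1) ^ card S * principal_minor M S))"
    by (rule sum.group[symmetric]) (auto simp: odd_blocks_def)
  also have "\<dots> = (\<Sum>T\<in>Pow {..<n}. (\<Prod>j\<in>T. e j) * parity_minor_sum k n M T)"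
    unfolding parity_minor_sum_def sum_distrib_left by (intro sum.cong refl) auto
  finally show ?thesis .
qed

lemma sum_sign_vectors_prod:
  assumes U: "U \<subseteq> {..<n}" and T: "T \<subseteq> {..<n}"
  shows "(\<Sum>e\<in>{..<n} \<rightarrow>\<^sub>E {1, -1::complex}. (\<Prod>j\<in>U. e j) * (\<Prod>j\<in>T. e j)) = (if T = U then 2 ^ n else 0)"
proof -
  let ?f = "\<lambda>j x. (if j \<in> U then x else 1) * (if j \<in> T then x else (1::complex))"
  have "(\<Sum>e\<in>{..<n} \<rightarrow>\<^sub>E {1, -1::complex}. (\<Prod>j\<in>U. e j) * (\<Prod>j\<in>T. e j))
      = (\<Sum>e\<in>{..<n} \<rightarrow>\<^sub>E {1, -1::complex}. \<Prod>j<n. ?f j (e j))"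
    using U T by (intro sum.cong refl) (simp add: prod.distrib prod.If_cases Int_absorb1)
  also have "\<dots> = (\<Prod>j<n. \<Sum>x\<in>{1, -1}. ?f j x)"
    by (rule prod_sum_PiE[symmetric]) auto
  also have "\<dots> = (\<Prod>j<n. if (j \<in> U) = (j \<in> T) then 2 else 0)"
    by (rule prod.cong[OF refl]) auto
  also have "\<dots> = (if T = U then 2 ^ n else 0)"
  proof (cases "T = U")
    case False
    then obtain j where "j < n" "(j \<in> U) \<noteq> (j \<in> T)" using U T by blast
    then have "(\<Prod>j<n. if (j \<in> U) = (j \<in> T) then 2 else 0) = (0::complex)"
      by (intro prod_zero) auto
    then show ?thesis using False by simp
  qed simp
  finally show ?thesis .
qed

lemma parity_minor_sum_eq_average:
  assumes M: "M \<in> carrier_mat (k * n) (k * n)" and U: "U \<subseteq> {..<n}"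
  shows "2 ^ n * parity_minor_sum k n M U
       = (\<Sum>e\<in>{..<n} \<rightarrow>\<^sub>E {1, -1}. (\<Prod>j\<in>U. e j) * det (1\<^sub>m (k * n) - wmat k n (block_scalar k e) * M))"
proof -
  have "(\<Sum>e\<in>{..<n} \<rightarrow>\<^sub>E {1, -1}. (\<Prod>j\<in>U. e j) * det (1\<^sub>m (k * n) - wmat k n (block_scalar k e) * M))
      = (\<Sum>e\<in>{..<n} \<rightarrow>\<^sub>E {1, -1}. \<Sum>T\<in>Pow {..<n}. parity_minor_sum k n M T * ((\<Prod>j\<in>U. e j) * (\<Prod>j\<in>T. e j)))"
    by (intro sum.cong refl)
       (auto simp: det_one_minus_block_scalar_mult[OF M] sum_distrib_left algebra_simps PiE_iff)
  also have "\<dots> = (\<Sum>T\<in>Pow {..<n}. parity_minor_sum k n M T * (if T = U then 2 ^ n else 0))"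
    using U by (subst sum.swap) (auto simp: sum_distrib_left[symmetric] sum_sign_vectors_prod intro!: sum.cong)
  also have "\<dots> = 2 ^ n * parity_minor_sum k n M U"
    using U by (simp add: if_distrib sum.delta' cong: if_cong)
  finally show ?thesis ..
qed

lemma wmat_block_scalar_commute:
  assumes v: "snd v permutes {..<n}" "\<And>j. j < n \<Longrightarrow> fst v j \<in> carrier_mat k k"
  shows "wmat k n (block_scalar k e) * wmat k n v = wmat k n v * wmat k n (block_scalar k (e \<circ> snd v))"
proof -
  have scalar: "snd (block_scalar k c) permutes {..<n}" "fst (block_scalar k c) j \<in> carrier_mat k k" for c j
    by (simp_all add: block_scalar_def permutes_id)
  have "wmult k n (block_scalar k e) v = wmult k n v (block_scalar k (e \<circ> snd v))"
  proof (rule prod_eqI)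
    have "(e j \<cdot>\<^sub>m 1\<^sub>m k) * fst v j = fst v j * (e j \<cdot>\<^sub>m 1\<^sub>m k)" if "j < n" for j
      using mult_smult_assoc_mat[OF one_carrier_mat v(2)[OF that]] mult_smult_distrib[OF v(2)[OF that] one_carrier_mat]
        left_mult_one_mat[OF v(2)[OF that]] right_mult_one_mat[OF v(2)[OF that]] by simp
    then show "fst (wmult k n (block_scalar k e) v) = fst (wmult k n v (block_scalar k (e \<circ> snd v)))"
      by (auto simp: wmult_def block_scalar_def permutes_inverses(1)[OF v(1)])
  qed (simp add: wmult_def block_scalar_def)
  then show ?thesis
    by (metis wmat_wmult[OF scalar(1) v(1) scalar(2) v(2)] wmat_wmult[OF v(1) scalar(1) v(2) scalar(2)])
qed

lemma det_one_minus_conj: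
  fixes V X Z E E' :: "'a::comm_ring_1 mat"
  assumes V: "V \<in> carrier_mat N N" and X: "X \<in> carrier_mat N N" and Z: "Z \<in> carrier_mat N N"
    and E: "E \<in> carrier_mat N N" and E': "E' \<in> carrier_mat N N"
    and VZ: "V * Z = 1\<^sub>m N" and EV: "E * V = V * E'"
  shows "det (1\<^sub>m N - E * (V * X * Z)) = det (1\<^sub>m N - E' * X)"
proof -
  have "V * ((1\<^sub>m N - E' * X) * Z) = V * Z - V * (E' * (X * Z))"
    using V X Z E' by (simp add: minus_mult_distrib_mat[of _ N N] mult_minus_distrib_mat[of _ N N]
                                 assoc_mult_mat[of E' N N X N Z N])
  also have "V * (E' * (X * Z)) = E * (V * X * Z)"
    using V X Z E E'
    by (simp add: assoc_mult_mat[of V N N E' N "X * Z" N, symmetric] EV[symmetric]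
                  assoc_mult_mat[of E N N V N "X * Z" N] assoc_mult_mat[of V N N X N Z N])
  finally have "det (1\<^sub>m N - E * (V * X * Z)) = det V * (det (1\<^sub>m N - E' * X) * det Z)"
    using V X Z E' VZ by (metis det_mult minus_carrier_mat mult_carrier_mat one_carrier_mat)
  also have "\<dots> = det (V * Z) * det (1\<^sub>m N - E' * X)"
    using V Z by (simp add: det_mult)
  finally show ?thesis by (simp add: VZ)
qed

text \<open>Conjugating by \<open>wmat k n v\<close> replaces \<open>block_scalar k e\<close> by \<open>block_scalar k (e \<circ> snd v)\<close>,
  so the average over \<open>e\<close> only relabels the blocks.\<close>

lemma parity_minor_sum_conj:
  assumes v: "snd v permutes {..<n}" "\<And>j. j < n \<Longrightarrow> fst v j \<in> carrier_mat k k"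
    and X: "X \<in> carrier_mat (k * n) (k * n)" and Z: "Z \<in> carrier_mat (k * n) (k * n)"
    and VZ: "wmat k n v * Z = 1\<^sub>m (k * n)" and T: "T \<subseteq> {..<n}"
  shows "parity_minor_sum k n (wmat k n v * X * Z) T = parity_minor_sum k n X (perm_inv (snd v) ` T)"
proof -
  let ?E = "{..<n} \<rightarrow>\<^sub>E {1, -1::complex}"
  let ?det = "\<lambda>e M. det (1\<^sub>m (k * n) - wmat k n (block_scalar k e) * M)"
  define \<sigma> where "\<sigma> = snd v"
  define r where "r e = restrict (e \<circ> \<sigma>) {..<n}" for e :: "nat \<Rightarrow> complex"
  have \<sigma>: "\<sigma> permutes {..<n}" using v(1) by (simp add: \<sigma>_def)
  have T': "perm_inv \<sigma> ` T \<subseteq> {..<n}" using T permutes_lessThan_iff[OF \<sigma>] by auto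
  have bij: "bij_betw r ?E ?E"
  proof (rule bij_betwI[where g = "\<lambda>e. restrict (e \<circ> perm_inv \<sigma>) {..<n}"])
  qed (use permutes_lessThan_iff[OF \<sigma>] in \<open>auto simp: r_def permutes_inverses[OF \<sigma>] fun_eq_iff PiE_def extensional_def\<close>)
  have "2 ^ n * parity_minor_sum k n (wmat k n v * X * Z) T
      = (\<Sum>e\<in>?E. (\<Prod>j\<in>T. e j) * ?det e (wmat k n v * X * Z))"
    using X Z by (intro parity_minor_sum_eq_average T) auto
  also have "\<dots> = (\<Sum>e\<in>?E. (\<Prod>j\<in>perm_inv \<sigma> ` T. r e j) * ?det (r e) X)"
  proof (rule sum.cong[OF refl])
    fix e assume "e \<in> ?E"
    have "(\<Prod>j\<in>perm_inv \<sigma> ` T. r e j) = (\<Prod>j\<in>T. r e (perm_inv \<sigma> j))"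
      using prod.reindex[OF inj_on_subset[OF permutes_inj[OF permutes_inv[OF \<sigma>]] subset_UNIV]] by simp
    also have "\<dots> = (\<Prod>j\<in>T. e j)"
      using T permutes_lessThan_iff[OF \<sigma>] by (intro prod.cong refl) (auto simp: r_def permutes_inverses[OF \<sigma>])
    moreover have "?det e (wmat k n v * X * Z) = ?det (r e) X"
      using det_one_minus_conj[OF wmat_carrier X Z wmat_carrier wmat_carrier VZ wmat_block_scalar_commute[OF v]]
        wmat_block_scalar_cong[of n "e \<circ> \<sigma>" "r e"]
      by (simp add: r_def \<sigma>_def)
    ultimately show "(\<Prod>j\<in>T. e j) * ?det e (wmat k n v * X * Z) = (\<Prod>j\<in>perm_inv \<sigma> ` T. r e j) * ?det (r e) X"
      by simp
  qed
  also have "\<dots> = (\<Sum>e\<in>?E. (\<Prod>j\<in>perm_inv \<sigma> ` T. e j) * ?det e X)"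
    by (rule sum.reindex_bij_betw[OF bij])
  also have "\<dots> = 2 ^ n * parity_minor_sum k n X (perm_inv \<sigma> ` T)"
    by (rule parity_minor_sum_eq_average[OF X T', symmetric])
  finally show ?thesis by (simp add: \<sigma>_def)
qed

section \<open>Characters of the Young subgroup\<close>

lemma tensor_char_mult:
  assumes disj: "I \<inter> I' = {}" and fin: "finite I" "finite I'"
    and inv: "\<And>j. j \<in> I \<Longrightarrow> perm_inv (snd x) j \<in> I" "\<And>j. j \<in> I' \<Longrightarrow> perm_inv (snd x) j \<in> I'"
  shows "tensor_char B \<rho> I x * tensor_char B' \<rho> I' x
       = (\<Sum>c\<in>PiE (I \<union> I') (\<lambda>j. if j \<in> I' then B' else B).
            \<Prod>j\<in>I \<union> I'. \<rho> (fst x j) (c j) (c (perm_inv (snd x) j)))"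
proof -
  let ?s = "perm_inv (snd x)"
  let ?f = "\<lambda>j a b. \<rho> (fst x j) a b"
  let ?glue = "\<lambda>(a, b). (\<lambda>j. if j \<in> I then a j else b j)"
  have bij: "bij_betw ?glue ((I \<rightarrow>\<^sub>E B) \<times> (I' \<rightarrow>\<^sub>E B')) (PiE (I \<union> I') (\<lambda>j. if j \<in> I' then B' else B))"
  proof (rule bij_betwI[where g = "\<lambda>c. (restrict c I, restrict c I')"])
  qed (use disj in \<open>auto simp: PiE_def extensional_def Pi_def fun_eq_iff\<close>)
  have glue: "(\<Prod>j\<in>I \<union> I'. ?f j (?glue ab j) (?glue ab (?s j)))
      = (\<Prod>j\<in>I. ?f j (fst ab j) (fst ab (?s j))) * (\<Prod>j\<in>I'. ?f j (snd ab j) (snd ab (?s j)))" for ab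
  proof -
    have "(\<Prod>j\<in>I. ?f j (?glue ab j) (?glue ab (?s j))) = (\<Prod>j\<in>I. ?f j (fst ab j) (fst ab (?s j)))"
      using inv(1) by (intro prod.cong refl) (simp add: case_prod_beta)
    moreover have "(\<Prod>j\<in>I'. ?f j (?glue ab j) (?glue ab (?s j))) = (\<Prod>j\<in>I'. ?f j (snd ab j) (snd ab (?s j)))"
      using inv(2) disj by (intro prod.cong refl) (auto simp: case_prod_beta)
    ultimately show ?thesis by (simp add: prod.union_disjoint[OF fin disj])
  qed
  have "tensor_char B \<rho> I x * tensor_char B' \<rho> I' x
      = (\<Sum>ab\<in>(I \<rightarrow>\<^sub>E B) \<times> (I' \<rightarrow>\<^sub>E B'). (\<Prod>j\<in>I. ?f j (fst ab j) (fst ab (?s j))) * (\<Prod>j\<in>I'. ?f j (snd ab j) (snd ab (?s j))))"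
    by (simp add: tensor_char_def sum_product sum.cartesian_product case_prod_beta)
  also have "\<dots> = (\<Sum>ab\<in>(I \<rightarrow>\<^sub>E B) \<times> (I' \<rightarrow>\<^sub>E B'). \<Prod>j\<in>I \<union> I'. ?f j (?glue ab j) (?glue ab (?s j)))"
    by (simp only: glue)
  also have "\<dots> = (\<Sum>c\<in>PiE (I \<union> I') (\<lambda>j. if j \<in> I' then B' else B). \<Prod>j\<in>I \<union> I'. ?f j (c j) (c (?s j)))"
    by (rule sum.reindex_bij_betw[OF bij])
  finally show ?thesis .
qed

definition blocks_union :: "nat \<Rightarrow> nat \<Rightarrow> (nat \<Rightarrow> nat set) \<Rightarrow> nat set" where
  "blocks_union k n a = {i\<in>{0..<k * n}. i mod k \<in> a (i div k)}"

lemma block_part_blocks_union: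
  assumes "j < n" "a j \<subseteq> {0..<k}"
  shows "block_part k (blocks_union k n a) j = a j"
  using assms block_index_less[OF assms(1)] by (auto simp: block_part_def blocks_union_def)

lemma blocks_union_block_part:
  assumes S: "S \<subseteq> {0..<k * n}"
  shows "blocks_union k n (restrict (block_part k S) {..<n}) = S"
proof safe
  fix i assume i: "i \<in> blocks_union k n (restrict (block_part k S) {..<n})"
  then have "i < k * n" by (simp add: blocks_union_def)
  then have "i mod k \<in> block_part k S (i div k)" using i block_div_less by (simp add: blocks_union_def)
  then show "i \<in> S" by (simp add: block_part_def)
next
  fix i assume i: "i \<in> S"
  then have "i < k * n" using S by auto
  moreover from this have "k > 0" by (cases k) auto
  ultimately show "i \<in> blocks_union k n (restrict (block_part k S) {..<n})"
    using i block_div_less by (auto simp: blocks_union_def block_part_def mult.commute)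
qed

lemma sum_PiE_parity_bases:
  assumes B: "B \<subseteq> {..<n}"
  shows "(\<Sum>a\<in>PiE {..<n} (\<lambda>j. if j \<in> B then odd_basis k else even_basis k). F a)
       = (\<Sum>S\<in>{S\<in>Pow {0..<k * n}. odd_blocks k n S = B}. F (restrict (block_part k S) {..<n}))"
proof (rule sum.reindex_bij_witness[where i = "\<lambda>S. restrict (block_part k S) {..<n}" and j = "blocks_union k n"])
  let ?P = "PiE {..<n} (\<lambda>j. if j \<in> B then odd_basis k else even_basis k)"
  fix a assume a: "a \<in> ?P"
  then have sub: "a j \<subseteq> {0..<k}" if "j < n" for j
    using that by (auto simp: PiE_def Pi_def odd_basis_def even_basis_def split: if_splits)
  have parts: "block_part k (blocks_union k n a) j = a j" if "j < n" for j
    by (rule block_part_blocks_union[of j n a, OF that sub[OF that]])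
  show "restrict (block_part k (blocks_union k n a)) {..<n} = a"
    using a parts by (auto simp: PiE_def extensional_def fun_eq_iff)
  then show "F (restrict (block_part k (blocks_union k n a)) {..<n}) = F a" by simp
  show "blocks_union k n a \<in> {S\<in>Pow {0..<k * n}. odd_blocks k n S = B}"
    using a parts B by (auto simp: blocks_union_def odd_blocks_def PiE_def Pi_def odd_basis_def even_basis_def
                             split: if_splits)
next
  fix S assume S: "S \<in> {S\<in>Pow {0..<k * n}. odd_blocks k n S = B}"
  then show "blocks_union k n (restrict (block_part k S) {..<n}) = S"
    using blocks_union_block_part by auto
  show "restrict (block_part k S) {..<n} \<in> PiE {..<n} (\<lambda>j. if j \<in> B then odd_basis k else even_basis k)"
    using S block_part_subset[of k S] by (auto simp: odd_blocks_def odd_basis_def even_basis_def)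
qed

lemma tensor_char_even_odd:
  assumes \<sigma>: "snd z permutes {..<n}" and B: "B \<subseteq> {..<n}" "snd z ` B = B"
  shows "tensor_char (even_basis k) wedge_sum_rep ({..<n} - B) z * tensor_char (odd_basis k) wedge_sum_rep B z
       = (\<Sum>S\<in>{S\<in>Pow {0..<k * n}. odd_blocks k n S = B}.
            \<Prod>j<n. wedge_sum_rep (fst z j) (block_part k S j) (block_part k S (perm_inv (snd z) j)))"
proof -
  let ?A = "{..<n} - B"
  have "perm_inv (snd z) j \<in> ?A" if "j \<in> ?A" for j
    using that perm_inv_image_invariant[OF \<sigma> permutes_image_complement[OF \<sigma> B(2)]] by blast
  moreover have "perm_inv (snd z) j \<in> B" if "j \<in> B" for j
    using that perm_inv_image_invariant[OF \<sigma> B(2)] by blast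
  ultimately have "tensor_char (even_basis k) wedge_sum_rep ?A z * tensor_char (odd_basis k) wedge_sum_rep B z
      = (\<Sum>c\<in>PiE (?A \<union> B) (\<lambda>j. if j \<in> B then odd_basis k else even_basis k).
           \<Prod>j\<in>?A \<union> B. wedge_sum_rep (fst z j) (c j) (c (perm_inv (snd z) j)))"
    using B(1) finite_subset[OF B(1)] by (intro tensor_char_mult) auto
  also have "?A \<union> B = {..<n}" using B(1) by auto
  also have "(\<Sum>c\<in>PiE {..<n} (\<lambda>j. if j \<in> B then odd_basis k else even_basis k).
           \<Prod>j<n. wedge_sum_rep (fst z j) (c j) (c (perm_inv (snd z) j)))
      = (\<Sum>S\<in>{S\<in>Pow {0..<k * n}. odd_blocks k n S = B}.
           \<Prod>j<n. wedge_sum_rep (fst z j) (block_part k S j) (block_part k S (perm_inv (snd z) j)))"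
    unfolding sum_PiE_parity_bases[OF B(1)]
    using permutes_lessThan_iff[OF \<sigma>] by (intro sum.cong prod.cong refl) auto
  finally show ?thesis .
qed

lemma eta_eps_char_eq_parity_minor_sum:
  assumes \<sigma>: "snd z permutes {..<n}" and m: "m \<le> n" and young: "snd z ` {..<n - m} = {..<n - m}"
  shows "(-1) ^ m * eta_eps_char k n m z = parity_minor_sum k n (wmat k n z) {n - m..<n}"
proof -
  define B where "B = {n - m..<n}"
  have A: "{..<n} - B = {..<n - m}" using m by (auto simp: B_def)
  have B: "B \<subseteq> {..<n}" "card B = m" "snd z ` B = B"
    using m permutes_image_complement[OF \<sigma> young] by (auto simp: B_def)
  have "(-1) ^ m * eta_eps_char k n m z
      = ((-1) ^ m * of_int (sign (restrict_perm (snd z) B)))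
        * (tensor_char (even_basis k) wedge_sum_rep ({..<n} - B) z * tensor_char (odd_basis k) wedge_sum_rep B z)"
    unfolding A by (simp add: eta_eps_char_def B_def algebra_simps)
  also have "(-1) ^ m * of_int (sign (restrict_perm (snd z) B)) = of_int (twisted_sign (snd z) B)"
    using B(2) by (simp add: twisted_sign_def sign_on_def restrict_perm_def restrict_id_def)
  also have "of_int (twisted_sign (snd z) B)
        * (tensor_char (even_basis k) wedge_sum_rep ({..<n} - B) z * tensor_char (odd_basis k) wedge_sum_rep B z)
      = (\<Sum>S\<in>{S\<in>Pow {0..<k * n}. odd_blocks k n S = B}. of_int (twisted_sign (snd z) (odd_blocks k n S)) *
           (\<Prod>j<n. wedge_sum_rep (fst z j) (block_part k S j) (block_part k S (perm_inv (snd z) j))))"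
    unfolding tensor_char_even_odd[OF \<sigma> B(1,3)] sum_distrib_left by (intro sum.cong refl) simp
  also have "\<dots> = parity_minor_sum k n (wmat k n z) B"
    unfolding parity_minor_sum_def by (intro sum.cong refl) (simp add: principal_minor_wmat[OF _ \<sigma>])
  finally show ?thesis by (simp add: B_def)
qed

lemma parity_minor_sum_wmat_non_invariant:
  assumes \<sigma>: "snd x permutes {..<n}" and U: "snd x ` U \<noteq> U"
  shows "parity_minor_sum k n (wmat k n x) U = 0"
  unfolding parity_minor_sum_def
proof (rule sum.neutral, clarify)
  fix S assume S: "S \<subseteq> {0..<k * n}" and U_def: "U = odd_blocks k n S"
  have "\<exists>j<n. card (block_part k S (perm_inv (snd x) j)) \<noteq> card (block_part k S j)"
  proof (rule ccontr)
    assume "\<not> ?thesis"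
    then have "card (block_part k S (perm_inv (snd x) j)) = card (block_part k S j)" if "j \<in> {..<n}" for j
      using that by auto
    then have "perm_inv (snd x) ` odd_blocks k n S = odd_blocks k n S"
      using permutes_level_set[of "perm_inv (snd x)" "{..<n}" "\<lambda>j. card (block_part k S j)" odd,
                               OF permutes_inv[OF \<sigma>]]
      by (simp add: odd_blocks_def lessThan_def)
    then have "snd x ` U = U"
      using perm_inv_image_invariant[OF permutes_inv[OF \<sigma>]] permutes_inv_inv[OF \<sigma>] U_def by metis
    with U show False ..
  qed
  then obtain j where "card (block_part k S (perm_inv (snd x) j)) \<noteq> card (block_part k S j)" by blast
  then show "(-1) ^ card S * principal_minor (wmat k n x) S = 0"
    using principal_minor_wmat_unbalanced[OF S \<sigma>] by simp
qed

section \<open>The induced characters\<close>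

lemma exists_permutes_image:
  assumes A: "finite A" and B: "B \<subseteq> A" and C: "C \<subseteq> A" and card: "card B = card C"
  obtains p where "p permutes A" "p ` B = C"
proof -
  have finB: "finite B" and finC: "finite C" using A B C finite_subset by auto
  obtain f where f: "bij_betw f B C" using finite_same_card_bij[OF finB finC card] by blast
  have "card (A - B) = card (A - C)"
    using card card_Diff_subset[OF finB B] card_Diff_subset[OF finC C] by simp
  then obtain g where g: "bij_betw g (A - B) (A - C)"
    using finite_same_card_bij A by blast
  define p where "p x = (if x \<in> B then f x else if x \<in> A then g x else x)" for x
  have "bij_betw p (B \<union> (A - B)) (C \<union> (A - C))"
  proof (rule bij_betw_combine)
    show "bij_betw p B C" using f by (rule bij_betw_cong[THEN iffD1, rotated]) (simp add: p_def)
    show "bij_betw p (A - B) (A - C)" using g by (rule bij_betw_cong[THEN iffD1, rotated]) (simp add: p_def)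
  qed blast
  moreover have "B \<union> (A - B) = A" "C \<union> (A - C) = A" using B C by auto
  ultimately have "p permutes A" by (intro bij_imp_permutes) (auto simp: p_def)
  moreover have "p ` B = C" using f by (auto simp: bij_betw_def p_def)
  ultimately show thesis by (rule that)
qed

lemma conj_image_eq_iff:
  assumes "bij \<tau>"
  shows "(perm_inv \<tau> \<circ> \<sigma> \<circ> \<tau>) ` L = L \<longleftrightarrow> \<sigma> ` (\<tau> ` L) = \<tau> ` L"
proof -
  have "\<tau> ` (perm_inv \<tau> \<circ> \<sigma> \<circ> \<tau>) ` L = \<sigma> ` \<tau> ` L"
    using assms by (simp add: image_comp[symmetric] image_image bij_is_surj surj_f_inv_f)
  then show ?thesis
    using inj_image_eq_iff[OF bij_is_inj[OF assms]] by metis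
qed

context
  fixes k :: nat and \<Gamma> :: "complex mat set"
  assumes \<Gamma>: "subgroup_GL k \<Gamma>"
begin

lemma young_sub_iff:
  assumes m: "m \<le> n" and h: "h \<in> wreath \<Gamma> k n"
  shows "h \<in> young_sub \<Gamma> k n m \<longleftrightarrow> snd h ` {n - m..<n} = {n - m..<n}"
proof -
  have "{..<n} - {..<n - m} = {n - m..<n}" "{..<n} - {n - m..<n} = {..<n - m}" using m by auto
  then show ?thesis
    using permutes_image_complement[OF wreathD(3)[OF h], of "{..<n - m}"]
      permutes_image_complement[OF wreathD(3)[OF h], of "{n - m..<n}"] h
    by (auto simp: young_sub_def)
qed

lemma left_coset_young_sub:
  assumes m: "m \<le> n" and y: "y \<in> wreath \<Gamma> k n"
  shows "(wmult k n y) ` young_sub \<Gamma> k n m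
       = {w \<in> wreath \<Gamma> k n. snd w ` {n - m..<n} = snd y ` {n - m..<n}}"
proof (intro equalityI subsetI)
  fix w assume "w \<in> wmult k n y ` young_sub \<Gamma> k n m"
  then obtain h where h: "h \<in> young_sub \<Gamma> k n m" and w: "w = wmult k n y h" by blast
  then have hG: "h \<in> wreath \<Gamma> k n" by (simp add: young_sub_def)
  have "snd w ` {n - m..<n} = snd y ` snd h ` {n - m..<n}" by (simp add: w wmult_def image_image)
  then have "snd w ` {n - m..<n} = snd y ` {n - m..<n}" using h young_sub_iff[OF m hG] by simp
  then show "w \<in> {w \<in> wreath \<Gamma> k n. snd w ` {n - m..<n} = snd y ` {n - m..<n}}"
    using wmult_closed[OF \<Gamma> y hG] w by simp
next
  fix w assume "w \<in> {w \<in> wreath \<Gamma> k n. snd w ` {n - m..<n} = snd y ` {n - m..<n}}"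
  then have wG: "w \<in> wreath \<Gamma> k n" and w: "snd w ` {n - m..<n} = snd y ` {n - m..<n}" by auto
  define h where "h = wmult k n (wreath_inv k \<Gamma> n y) w"
  have hG: "h \<in> wreath \<Gamma> k n" using wmult_closed[OF \<Gamma> wreath_inv_closed[OF \<Gamma> y] wG] by (simp add: h_def)
  have "snd h ` {n - m..<n} = perm_inv (snd y) ` snd w ` {n - m..<n}"
    by (simp add: h_def wmult_def wreath_inv_def image_image)
  also have "\<dots> = perm_inv (snd y) ` snd y ` {n - m..<n}" by (simp only: w)
  also have "\<dots> = {n - m..<n}"
    using permutes_inj[OF wreathD(3)[OF y]] by (simp add: image_comp)
  finally have "h \<in> young_sub \<Gamma> k n m" using young_sub_iff[OF m hG] by simp
  moreover have "w = wmult k n y h" using wmult_wreath_inv_cancel[OF \<Gamma> y wG] by (simp add: h_def)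
  ultimately show "w \<in> wmult k n y ` young_sub \<Gamma> k n m" by blast
qed

lemma exists_wreath_image:
  assumes m: "m \<le> n" and U: "U \<subseteq> {..<n}" "card U = m"
  obtains y where "y \<in> wreath \<Gamma> k n" "snd y ` {n - m..<n} = U"
proof -
  have "{n - m..<n} \<subseteq> {..<n}" "card {n - m..<n} = card U" using U m by auto
  then obtain p where p: "p permutes {..<n}" "p ` {n - m..<n} = U"
    using exists_permutes_image[of "{..<n}" "{n - m..<n}" U] U(1) by blast
  have "(\<lambda>_. 1\<^sub>m k, p) \<in> wreath \<Gamma> k n" using p(1) subgroup_GL_one[OF \<Gamma>] by (intro wreathI) auto
  then show thesis using p(2) that by auto
qed

lemma young_sub_cosets:
  assumes m: "m \<le> n"
  shows "{(\<lambda>h. wmult k n y h) ` young_sub \<Gamma> k n m | y. y \<in> wreath \<Gamma> k n}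
       = (\<lambda>U. {w \<in> wreath \<Gamma> k n. snd w ` {n - m..<n} = U}) ` {U. U \<subseteq> {..<n} \<and> card U = m}"
proof (intro equalityI subsetI)
  fix C assume "C \<in> {(\<lambda>h. wmult k n y h) ` young_sub \<Gamma> k n m | y. y \<in> wreath \<Gamma> k n}"
  then obtain y where y: "y \<in> wreath \<Gamma> k n" and C: "C = wmult k n y ` young_sub \<Gamma> k n m" by auto
  have p: "snd y permutes {..<n}" using wreathD(3)[OF y] .
  have "snd y ` {n - m..<n} \<subseteq> {..<n}" "card (snd y ` {n - m..<n}) = m"
    using permutes_lessThan_iff[OF p] card_image[OF inj_on_subset[OF permutes_inj[OF p] subset_UNIV]] m
    by auto
  then show "C \<in> (\<lambda>U. {w \<in> wreath \<Gamma> k n. snd w ` {n - m..<n} = U}) ` {U. U \<subseteq> {..<n} \<and> card U = m}"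
    unfolding C left_coset_young_sub[OF m y] by blast
next
  fix C assume "C \<in> (\<lambda>U. {w \<in> wreath \<Gamma> k n. snd w ` {n - m..<n} = U}) ` {U. U \<subseteq> {..<n} \<and> card U = m}"
  then obtain U where U: "U \<subseteq> {..<n}" "card U = m" and C: "C = {w \<in> wreath \<Gamma> k n. snd w ` {n - m..<n} = U}"
    by auto
  obtain y where y: "y \<in> wreath \<Gamma> k n" "snd y ` {n - m..<n} = U" using exists_wreath_image[OF m U] .
  then have "C = wmult k n y ` young_sub \<Gamma> k n m" using left_coset_young_sub[OF m y(1)] C by simp
  then show "C \<in> {(\<lambda>h. wmult k n y h) ` young_sub \<Gamma> k n m | y. y \<in> wreath \<Gamma> k n}"
    using y(1) by blast
qed

lemma eta_eps_char_conj:
  assumes m: "m \<le> n" and x: "x \<in> wreath \<Gamma> k n" and y: "y \<in> wreath \<Gamma> k n"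
  defines "z \<equiv> wmult k n (wreath_inv k \<Gamma> n y) (wmult k n x y)"
    and "U \<equiv> snd y ` {n - m..<n}"
  shows "(if z \<in> young_sub \<Gamma> k n m then eta_eps_char k n m z else 0)
       = (if snd x ` U = U then (-1) ^ m * parity_minor_sum k n (wmat k n x) U else 0)"
proof -
  let ?L = "{n - m..<n}" and ?y' = "wreath_inv k \<Gamma> n y"
  have y': "?y' \<in> wreath \<Gamma> k n" by (rule wreath_inv_closed[OF \<Gamma> y])
  have z: "z \<in> wreath \<Gamma> k n" unfolding z_def by (intro wmult_closed[OF \<Gamma>] y' x y)
  have py: "snd y permutes {..<n}" using wreathD(3)[OF y] .
  have "z \<in> young_sub \<Gamma> k n m \<longleftrightarrow> (perm_inv (snd y) \<circ> snd x \<circ> snd y) ` ?L = ?L"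
    using young_sub_iff[OF m z] by (simp add: z_def wmult_def wreath_inv_def o_assoc)
  also have "\<dots> \<longleftrightarrow> snd x ` U = U"
    unfolding U_def by (rule conj_image_eq_iff[OF permutes_bij[OF py]])
  finally have young: "z \<in> young_sub \<Gamma> k n m \<longleftrightarrow> snd x ` U = U" .
  have "eta_eps_char k n m z = (-1) ^ m * parity_minor_sum k n (wmat k n x) U" if "z \<in> young_sub \<Gamma> k n m"
  proof -
    have wz: "wmat k n z = wmat k n ?y' * wmat k n x * wmat k n y"
      unfolding z_def
      using wmat_wmult[OF wreathD(3)[OF y'] wreathD(3)[OF wmult_closed[OF \<Gamma> x y]]
                          wreath_carrier[OF \<Gamma> y'] wreath_carrier[OF \<Gamma> wmult_closed[OF \<Gamma> x y]]]
            wmat_wmult[OF wreathD(3)[OF x] py wreath_carrier[OF \<Gamma> x] wreath_carrier[OF \<Gamma> y]]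
      using assoc_mult_mat[OF wmat_carrier wmat_carrier wmat_carrier] by simp
    have L: "?L \<subseteq> {..<n}" by auto
    have inv: "wmat k n ?y' * wmat k n y = 1\<^sub>m (k * n)"
      using wmat_wmult[OF wreathD(3)[OF y'] py wreath_carrier[OF \<Gamma> y'] wreath_carrier[OF \<Gamma> y]]
      by (simp add: wreath_inv_wmult[OF \<Gamma> y] wmat_wone)
    have "(-1) ^ m * eta_eps_char k n m z = parity_minor_sum k n (wmat k n z) ?L"
      using that m wreathD(3)[OF z] by (intro eta_eps_char_eq_parity_minor_sum) (auto simp: young_sub_def)
    also have "\<dots> = parity_minor_sum k n (wmat k n x) U"
      unfolding wz U_def
      using parity_minor_sum_conj[OF wreathD(3)[OF y'] wreath_carrier[OF \<Gamma> y'] wmat_carrier wmat_carrier inv L]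
      by (simp add: wreath_inv_def permutes_inv_inv[OF py])
    finally have "(-1) ^ m * ((-1) ^ m * eta_eps_char k n m z) = (-1) ^ m * parity_minor_sum k n (wmat k n x) U"
      by simp
    then show ?thesis by (simp add: mult.assoc[symmetric] power_mult_distrib[symmetric])
  qed
  then show ?thesis using young by simp
qed

lemma ind_char_young_sub:
  assumes m: "m \<le> n" and x: "x \<in> wreath \<Gamma> k n"
  shows "ind_char (wreath \<Gamma> k n) (wmult k n) (winv \<Gamma> k n) (young_sub \<Gamma> k n m) (eta_eps_char k n m) x
       = (\<Sum>U | U \<subseteq> {..<n} \<and> card U = m.
            if snd x ` U = U then (-1) ^ m * parity_minor_sum k n (wmat k n x) U else 0)"
proof -
  define C where "C U = {w \<in> wreath \<Gamma> k n. snd w ` {n - m..<n} = U}" for U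
  have rep: "(SOME y. y \<in> C U) \<in> C U" if "U \<in> {U. U \<subseteq> {..<n} \<and> card U = m}" for U
  proof -
    have "U \<subseteq> {..<n}" "card U = m" using that by auto
    then obtain y where "y \<in> wreath \<Gamma> k n" "snd y ` {n - m..<n} = U"
      by (rule exists_wreath_image[OF m])
    then have "y \<in> C U" by (simp add: C_def)
    then show ?thesis by (rule someI)
  qed
  have "inj_on C {U. U \<subseteq> {..<n} \<and> card U = m}"
    using rep by (intro inj_onI) (metis (mono_tags, lifting) C_def mem_Collect_eq)
  then have "ind_char (wreath \<Gamma> k n) (wmult k n) (winv \<Gamma> k n) (young_sub \<Gamma> k n m) (eta_eps_char k n m) x
      = (\<Sum>U | U \<subseteq> {..<n} \<and> card U = m. let y = SOME y. y \<in> C U;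
           z = wmult k n (winv \<Gamma> k n y) (wmult k n x y)
         in if z \<in> young_sub \<Gamma> k n m then eta_eps_char k n m z else 0)"
    unfolding ind_char_def young_sub_cosets[OF m] C_def[symmetric] by (simp add: sum.reindex)
  also have "\<dots> = (\<Sum>U | U \<subseteq> {..<n} \<and> card U = m.
            if snd x ` U = U then (-1) ^ m * parity_minor_sum k n (wmat k n x) U else 0)"
  proof (rule sum.cong[OF refl])
    fix U assume "U \<in> {U. U \<subseteq> {..<n} \<and> card U = m}"
    then have y: "(SOME y. y \<in> C U) \<in> wreath \<Gamma> k n" "snd (SOME y. y \<in> C U) ` {n - m..<n} = U"
      using rep by (auto simp: C_def)
    show "(let y = SOME y. y \<in> C U; z = wmult k n (winv \<Gamma> k n y) (wmult k n x y)
         in if z \<in> young_sub \<Gamma> k n m then eta_eps_char k n m z else 0)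
       = (if snd x ` U = U then (-1) ^ m * parity_minor_sum k n (wmat k n x) U else 0)"
      unfolding Let_def winv_eq_wreath_inv[OF \<Gamma> y(1)] by (rule eta_eps_char_conj[OF m x y(1), unfolded y(2)])
  qed
  finally show ?thesis .
qed

end

theorem mainTheorem7:
  fixes \<Gamma> :: "complex mat set" and k n :: nat
  assumes "subgroup_GL k \<Gamma>" and "n \<ge> 1"
  shows "\<forall>x \<in> wreath \<Gamma> k n. lambda_char (wmat k n x) = eta_lambda \<Gamma> k n x"
proof
  fix x assume x: "x \<in> wreath \<Gamma> k n"
  let ?P = "\<lambda>U. if snd x ` U = U then parity_minor_sum k n (wmat k n x) U else 0"
  have "eta_lambda \<Gamma> k n x = (\<Sum>m = 0..n. \<Sum>U | U \<subseteq> {..<n} \<and> card U = m. ?P U)"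
    unfolding eta_lambda_def
    by (intro sum.cong refl)
       (simp add: ind_char_young_sub[OF assms(1) _ x] sum_distrib_left if_distrib
                  mult.assoc[symmetric] power_mult_distrib[symmetric] cong: if_cong)
  also have "\<dots> = (\<Sum>m = 0..n. \<Sum>U\<in>{U\<in>Pow {..<n}. card U = m}. ?P U)"
    by simp
  also have "\<dots> = (\<Sum>U\<in>Pow {..<n}. ?P U)"
    by (rule sum.group) (auto intro: card_mono[of "{..<n}", simplified])
  also have "\<dots> = (\<Sum>U\<in>Pow {..<n}. parity_minor_sum k n (wmat k n x) U)"
    using parity_minor_sum_wmat_non_invariant[OF wreathD(3)[OF x]] by (intro sum.cong refl) auto
  also have "\<dots> = lambda_char (wmat k n x)"
    by (rule lambda_char_eq_sum_parity_minor_sums[symmetric]) simp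
  finally show "lambda_char (wmat k n x) = eta_lambda \<Gamma> k n x" ..
qed

end
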